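(* Let $\mathcal C$ be either a closed convex curve, or a convex arc with total curvature $\int_{\mathcal C}\kappa\,ds\le\pi$, and assume its radius of curvature satisfies $R_1\le\rho\le R_2$ at every point, for constants $0<R_1\le R_2$. Let $\mathcal L$ be a lattice in $\mathbb R^2$ and let $P_1',P_2',P_3'$ be distinct points of $\mathcal L$ with $\mathrm{dist}(P_j',\mathcal C)<\delta$ for $j=1,2,3$, where $\delta>0$ satisfies $$\delta<\frac{d_{\mathcal L}^2}{2\left(R_2+d_{\mathcal L}+\sqrt{(R_2+d_{\mathcal L})^2-d_{\mathcal L}^2}\right)},$$ and let $P_j$ be a point of $\mathcal C$ with $\|P_j-P_j'\|<\delta$ for $j=1,2,3$. Then $$\mathrm{Area}(\triangle P_1P_2P_3)\ge\frac{A_{\mathcal L}}{2}-\big(\|P_2-P_1\|+\|P_3-P_2\|\big)\delta-\frac32\delta^2.$$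
   Context: A lattice is a set $\mathcal L=\mathcal L(v_0,v_1,v_2)=\{v_0+mv_1+nv_2: m,n\in\mathbb Z\}$ where $v_0,v_1,v_2\in\mathbb R^2$ and $v_1,v_2$ are linearly independent; $A_{\mathcal L}=|\det(v_1,v_2)|$ and $d_{\mathcal L}=\min\{\|P-Q\|:P,Q\in\mathcal L,\ P\ne Q\}$. Curves are of class $C^2$ with nonvanishing first and second derivative vectors, oriented so that the curvature $\kappa$ is positive; a convex arc is such a non-closed curve on the boundary of a convex planar region. $\rho=1/\kappa$, $s$ is arclength, and $\mathrm{dist}(P,\mathcal C)$ is the Euclidean distance from $P$ to $\mathcal C$. *)

theory Defs
  imports "HOL-Analysis.Analysis"
begin

text \<open>Points of the plane are modelled as pairs of reals (the product norm is Euclidean).\<close>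

definition det2 :: "real \<times> real \<Rightarrow> real \<times> real \<Rightarrow> real" where
  "det2 u v = fst u * snd v - snd u * fst v"

definition lattice :: "real \<times> real \<Rightarrow> real \<times> real \<Rightarrow> real \<times> real \<Rightarrow> (real \<times> real) set" where
  "lattice v0 v1 v2 = {v0 + of_int m *\<^sub>R v1 + of_int n *\<^sub>R v2 | m n. True}"

definition lattice_area :: "real \<times> real \<Rightarrow> real \<times> real \<Rightarrow> real" where
  "lattice_area v1 v2 = \<bar>det2 v1 v2\<bar>"

text \<open>Minimal distance between distinct lattice points (the minimum exists; Inf equals it).\<close>
definition lattice_mindist :: "(real \<times> real) set \<Rightarrow> real" where
  "lattice_mindist L = Inf {dist P Q | P Q. P \<in> L \<and> Q \<in> L \<and> P \<noteq> Q}"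

definition tri_area :: "real \<times> real \<Rightarrow> real \<times> real \<Rightarrow> real \<times> real \<Rightarrow> real" where
  "tri_area P1 P2 P3 = \<bar>det2 (P2 - P1) (P3 - P1)\<bar> / 2"

definition curvature :: "(real \<Rightarrow> real \<times> real) \<Rightarrow> (real \<Rightarrow> real \<times> real) \<Rightarrow> real \<Rightarrow> real" where
  "curvature g1 g2 t = det2 (g1 t) (g2 t) / norm (g1 t) ^ 3"

definition closed_convex_curve ::
  "(real \<Rightarrow> real \<times> real) \<Rightarrow> (real \<Rightarrow> real \<times> real) \<Rightarrow> (real \<Rightarrow> real \<times> real) \<Rightarrow> real \<Rightarrow> real \<Rightarrow> bool" where
  "closed_convex_curve g g1 g2 a b \<longleftrightarrow>
     a < b \<and>
     (\<forall>t. g (t + (b - a)) = g t) \<and>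
     (\<forall>t. (g has_vector_derivative g1 t) (at t)) \<and>
     (\<forall>t. (g1 has_vector_derivative g2 t) (at t)) \<and>
     continuous_on UNIV g2 \<and>
     (\<forall>t. g1 t \<noteq> 0 \<and> g2 t \<noteq> 0 \<and> curvature g1 g2 t > 0) \<and>
     inj_on g {a..<b} \<and>
     (\<exists>K. convex K \<and> compact K \<and> interior K \<noteq> {} \<and> g ` {a..b} = frontier K)"

definition convex_arc ::
  "(real \<Rightarrow> real \<times> real) \<Rightarrow> (real \<Rightarrow> real \<times> real) \<Rightarrow> (real \<Rightarrow> real \<times> real) \<Rightarrow> real \<Rightarrow> real \<Rightarrow> bool" where
  "convex_arc g g1 g2 a b \<longleftrightarrow>
     a < b \<and>
     (\<forall>t\<in>{a..b}. (g has_vector_derivative g1 t) (at t within {a..b})) \<and>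
     (\<forall>t\<in>{a..b}. (g1 has_vector_derivative g2 t) (at t within {a..b})) \<and>
     continuous_on {a..b} g2 \<and>
     (\<forall>t\<in>{a..b}. g1 t \<noteq> 0 \<and> g2 t \<noteq> 0 \<and> curvature g1 g2 t > 0) \<and>
     inj_on g {a..b} \<and>
     (\<exists>K. convex K \<and> interior K \<noteq> {} \<and> g ` {a..b} \<subseteq> frontier K)"

text \<open>Total curvature: integral of kappa ds = integral of kappa(t) |g'(t)| dt.\<close>
definition total_curvature ::
  "(real \<Rightarrow> real \<times> real) \<Rightarrow> (real \<Rightarrow> real \<times> real) \<Rightarrow> real \<Rightarrow> real \<Rightarrow> real" where
  "total_curvature g1 g2 a b = integral {a..b} (\<lambda>t. curvature g1 g2 t * norm (g1 t))"

end

theory Submission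
  imports Defs "HOL-Library.Periodic_Fun"
begin

(*
  Twice the area of a triangle with vertices in the lattice is an integer multiple of
  A_L = |det (v1, v2)|, so the triangle P1' P2' P3' has area at least A_L / 2 as soon as it is
  non-degenerate; moving each vertex by less than delta changes twice the area by at most
  2 (|P2 - P1| + |P3 - P2|) delta + 3 delta^2.

  It remains to see that three lattice points within delta of the curve are not collinear.
  Otherwise, in coordinates in which their line is horizontal, the curve has three points in a
  horizontal strip of width 2 delta with horizontal gaps larger than D = d_L - 2 delta, and the
  bound on delta says exactly that D^2 > 4 R2 delta. The tangent at the middle point is not
  vertical, say it points to the right; then the points of the curve on either side lie above the
  parabola of curvature 1/R2 tangent there: where the curve is a graph this is the curvature
  bound, past a vertical tangent it comes from convexity and, on an arc, from the tangent turning
  by at most pi. Over a horizontal distance D this parabola leaves the strip, so the slope at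
  the middle point would have to be both positive and negative.
*)

section \<open>Planar linear algebra\<close>

lemma inner_real_pair: "(u :: real \<times> real) \<bullet> v = fst u * fst v + snd u * snd v"
  by (simp add: inner_prod_def)

lemma norm_real_pair_sq: "(norm (v :: real \<times> real))\<^sup>2 = (fst v)\<^sup>2 + (snd v)\<^sup>2"
  by (simp add: norm_prod_def)

lemma det2_swap: "det2 u v = - det2 v u"
  by (simp add: det2_def)

lemma det2_scaleR: "det2 (c *\<^sub>R u) (d *\<^sub>R v) = c * d * det2 u v"
  by (simp add: det2_def algebra_simps)

lemma det2_diff_right: "det2 u (v - w) = det2 u v - det2 u w"
  by (simp add: det2_def algebra_simps)

lemma abs_fst_le_norm: "\<bar>fst (v :: real \<times> real)\<bar> \<le> norm v"
  by (metis norm_fst_le prod.collapse real_norm_def)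

lemma abs_snd_le_norm: "\<bar>snd (v :: real \<times> real)\<bar> \<le> norm v"
  by (metis norm_snd_le prod.collapse real_norm_def)

lemma det2_sq_plus_inner_sq: "(det2 u v)\<^sup>2 + (u \<bullet> v)\<^sup>2 = (norm u)\<^sup>2 * (norm v)\<^sup>2"
  unfolding norm_real_pair_sq inner_real_pair det2_def by (simp add: power2_eq_square algebra_simps)

lemma abs_det2_le: "\<bar>det2 u v\<bar> \<le> norm u * norm v"
proof (rule power2_le_imp_le)
  have "(det2 u v)\<^sup>2 \<le> (norm u)\<^sup>2 * (norm v)\<^sup>2"
    using det2_sq_plus_inner_sq[of u v] zero_le_power2[of "u \<bullet> v"] by linarith
  then show "\<bar>det2 u v\<bar>\<^sup>2 \<le> (norm u * norm v)\<^sup>2"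
    by (simp add: power_mult_distrib)
qed simp

text \<open>Coordinates with respect to the positively oriented orthonormal frame whose first vector is \<open>e\<close>.\<close>

definition frame :: "real \<times> real \<Rightarrow> real \<times> real \<Rightarrow> real \<times> real" where
  "frame e v = (e \<bullet> v, det2 e v)"

lemma linear_frame: "linear (frame e)"
  by (rule linearI) (simp_all add: frame_def inner_real_pair det2_def algebra_simps)

lemma
  assumes "norm e = 1"
  shows det2_frame: "det2 (frame e u) (frame e v) = det2 u v"
    and inner_frame: "frame e u \<bullet> frame e v = u \<bullet> v"
    and norm_frame: "norm (frame e v) = norm v"
proof -
  have e: "(fst e)\<^sup>2 + (snd e)\<^sup>2 = 1"
    using assms norm_real_pair_sq[of e] by simp
  have "det2 (frame e u) (frame e v) = ((fst e)\<^sup>2 + (snd e)\<^sup>2) * det2 u v"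
    by (simp add: frame_def inner_real_pair det2_def power2_eq_square algebra_simps)
  then show "det2 (frame e u) (frame e v) = det2 u v"
    using e by simp
  have "frame e p \<bullet> frame e q = ((fst e)\<^sup>2 + (snd e)\<^sup>2) * (p \<bullet> q)" for p q
    by (simp add: frame_def inner_real_pair det2_def power2_eq_square algebra_simps)
  then have inner: "frame e p \<bullet> frame e q = p \<bullet> q" for p q
    using e by simp
  then show "frame e u \<bullet> frame e v = u \<bullet> v" .
  show "norm (frame e v) = norm v"
    using inner[of v v] by (simp add: dot_square_norm power2_eq_iff_nonneg)
qed

lemma frame_diff: "frame e (p - q) = (e \<bullet> p - e \<bullet> q, det2 e p - det2 e q)"
  by (simp add: frame_def inner_diff_right det2_def algebra_simps)

lemma
  assumes "norm e = 1" "dist p q < \<delta>"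
  shows inner_diff_less_of_dist: "\<bar>e \<bullet> p - e \<bullet> q\<bar> < \<delta>"
    and det2_diff_less_of_dist: "\<bar>det2 e p - det2 e q\<bar> < \<delta>"
proof -
  have "norm (frame e (p - q)) < \<delta>"
    using assms by (simp add: norm_frame dist_norm)
  then show "\<bar>e \<bullet> p - e \<bullet> q\<bar> < \<delta>" "\<bar>det2 e p - det2 e q\<bar> < \<delta>"
    using abs_fst_le_norm[of "frame e (p - q)"] abs_snd_le_norm[of "frame e (p - q)"]
    unfolding frame_diff by auto
qed

lemma dist_on_line:
  assumes "norm e = 1" "det2 e p = det2 e q"
  shows "dist p q = \<bar>e \<bullet> p - e \<bullet> q\<bar>"
  using norm_frame[OF assms(1), of "p - q"] assms(2) by (simp add: frame_diff dist_norm)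

section \<open>Lattice triangles and their perturbations\<close>

lemma lattice_diff:
  assumes "P \<in> lattice v0 v1 v2" "Q \<in> lattice v0 v1 v2"
  obtains m n :: int where "P - Q = of_int m *\<^sub>R v1 + of_int n *\<^sub>R v2"
proof -
  obtain m n where P: "P = v0 + of_int m *\<^sub>R v1 + of_int n *\<^sub>R v2"
    using assms(1) unfolding lattice_def by blast
  obtain m' n' where Q: "Q = v0 + of_int m' *\<^sub>R v1 + of_int n' *\<^sub>R v2"
    using assms(2) unfolding lattice_def by blast
  have "P - Q = of_int (m - m') *\<^sub>R v1 + of_int (n - n') *\<^sub>R v2"
    unfolding P Q by (simp add: algebra_simps)
  then show thesis by (rule that)
qed

lemma lattice_det2_multiple:
  assumes "P1 \<in> lattice v0 v1 v2" "P2 \<in> lattice v0 v1 v2" "P3 \<in> lattice v0 v1 v2"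
  obtains k :: int where "det2 (P2 - P1) (P3 - P1) = of_int k * det2 v1 v2"
proof -
  obtain m n where 2: "P2 - P1 = of_int m *\<^sub>R v1 + of_int n *\<^sub>R v2"
    using lattice_diff[OF assms(2,1)] .
  obtain m' n' where 3: "P3 - P1 = of_int m' *\<^sub>R v1 + of_int n' *\<^sub>R v2"
    using lattice_diff[OF assms(3,1)] .
  have "det2 (P2 - P1) (P3 - P1) = of_int (m * n' - n * m') * det2 v1 v2"
    unfolding 2 3 by (simp add: det2_def algebra_simps)
  then show thesis by (rule that)
qed

lemma lattice_area_le_abs_det2:
  assumes "P1 \<in> lattice v0 v1 v2" "P2 \<in> lattice v0 v1 v2" "P3 \<in> lattice v0 v1 v2"
    and "det2 (P2 - P1) (P3 - P1) \<noteq> 0"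
  shows "lattice_area v1 v2 \<le> \<bar>det2 (P2 - P1) (P3 - P1)\<bar>"
proof -
  obtain k :: int where k: "det2 (P2 - P1) (P3 - P1) = of_int k * det2 v1 v2"
    using lattice_det2_multiple[OF assms(1-3)] .
  with assms(4) have "k \<noteq> 0"
    by auto
  then have "1 \<le> \<bar>real_of_int k\<bar>"
    by linarith
  then have "1 * \<bar>det2 v1 v2\<bar> \<le> \<bar>real_of_int k\<bar> * \<bar>det2 v1 v2\<bar>"
    by (rule mult_right_mono) simp
  then show ?thesis
    unfolding lattice_area_def k by (simp add: abs_mult)
qed

lemma
  assumes "P \<in> L" "Q \<in> L" "P \<noteq> Q"
  shows lattice_mindist_le_dist: "lattice_mindist L \<le> dist P Q"
    and lattice_mindist_nonneg: "0 \<le> lattice_mindist L"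
proof -
  define S where "S = {dist P Q | P Q. P \<in> L \<and> Q \<in> L \<and> P \<noteq> Q}"
  have bdd: "bdd_below S"
    unfolding S_def by (rule bdd_belowI[of _ 0]) auto
  have mem: "dist P Q \<in> S"
    unfolding S_def using assms by blast
  show "lattice_mindist L \<le> dist P Q"
    unfolding lattice_mindist_def S_def[symmetric] by (rule cInf_lower[OF mem bdd])
  show "0 \<le> lattice_mindist L"
    unfolding lattice_mindist_def S_def[symmetric] using mem
    by (intro cInf_greatest) (auto simp: S_def)
qed

lemma det2_perturb:
  "det2 ((P2 + e2) - (P1 + e1)) ((P3 + e3) - (P1 + e1)) =
     det2 (P2 - P1) (P3 - P1) + (det2 e1 (P2 - P3) + det2 e2 (P3 - P1) + det2 e3 (P1 - P2))
     + (det2 e1 e2 + det2 e2 e3 + det2 e3 e1)"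
  by (simp add: det2_def algebra_simps)

lemma tri_area_perturb:
  fixes P1 P2 P3 P1' P2' P3' :: "real \<times> real"
  assumes "dist P1 P1' < \<delta>" "dist P2 P2' < \<delta>" "dist P3 P3' < \<delta>"
    and "A \<le> \<bar>det2 (P2' - P1') (P3' - P1')\<bar>"
  shows "A / 2 - (dist P2 P1 + dist P3 P2) * \<delta> - 3 / 2 * \<delta>\<^sup>2 \<le> tri_area P1 P2 P3"
proof -
  define e1 e2 e3 where "e1 = P1' - P1" and "e2 = P2' - P2" and "e3 = P3' - P3"
  have e: "norm e1 \<le> \<delta>" "norm e2 \<le> \<delta>" "norm e3 \<le> \<delta>"
    using assms(1-3) unfolding e1_def e2_def e3_def dist_norm by (simp_all add: norm_minus_commute)
  have "0 \<le> \<delta>"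
    using e(1) norm_ge_zero order_trans by blast
  define u w where "u = dist P2 P1" and "w = dist P3 P2"
  have sides: "norm (P1 - P2) = u" "norm (P2 - P3) = w" "norm (P3 - P1) \<le> u + w"
    unfolding u_def w_def dist_norm
    using norm_triangle_ineq[of "P3 - P2" "P2 - P1"] by (simp_all add: norm_minus_commute)
  have bound: "\<bar>det2 p q\<bar> \<le> \<delta> * l" if "norm p \<le> \<delta>" "norm q \<le> l" for p q l
    using abs_det2_le[of p q] mult_mono[OF that \<open>0 \<le> \<delta>\<close> norm_ge_zero] by linarith
  have linear: "\<bar>det2 e1 (P2 - P3) + det2 e2 (P3 - P1) + det2 e3 (P1 - P2)\<bar> \<le> 2 * ((u + w) * \<delta>)"
    using bound[OF e(1), of "P2 - P3" w] bound[OF e(2) sides(3)] bound[OF e(3), of "P1 - P2" u] sides(1,2)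
    by (simp add: algebra_simps)
  have quadratic: "\<bar>det2 e1 e2 + det2 e2 e3 + det2 e3 e1\<bar> \<le> 3 * \<delta>\<^sup>2"
    using bound[OF e(1,2)] bound[OF e(2,3)] bound[OF e(3,1)] by (simp add: power2_eq_square)
  have "det2 (P2' - P1') (P3' - P1') = det2 (P2 - P1) (P3 - P1)
      + (det2 e1 (P2 - P3) + det2 e2 (P3 - P1) + det2 e3 (P1 - P2)) + (det2 e1 e2 + det2 e2 e3 + det2 e3 e1)"
    using det2_perturb[of P2 e2 P1 e1 P3 e3] by (simp add: e1_def e2_def e3_def)
  then have "A \<le> \<bar>det2 (P2 - P1) (P3 - P1)\<bar> + 2 * ((u + w) * \<delta>) + 3 * \<delta>\<^sup>2"
    using assms(4) linear quadratic by linarith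
  then show ?thesis
    unfolding tri_area_def u_def w_def by (simp add: field_simps)
qed

section \<open>Convex curves with bounded radius of curvature\<close>

lemma has_real_derivative_components:
  assumes "(f has_vector_derivative v) F"
  shows "((\<lambda>t. fst (f t)) has_real_derivative fst v) F"
    and "((\<lambda>t. snd (f t)) has_real_derivative snd v) F"
  using bounded_linear.has_vector_derivative[OF bounded_linear_fst assms]
    bounded_linear.has_vector_derivative[OF bounded_linear_snd assms]
  by (simp_all add: has_real_derivative_iff_has_vector_derivative)

text \<open>Reflection in the vertical axis combined with reversal of the parameter: it preserves the
  orientation, so it maps convex curves to convex curves and exchanges left and right.\<close>

definition mirror :: "(real \<Rightarrow> real \<times> real) \<Rightarrow> real \<Rightarrow> real \<times> real" where
  "mirror h t = (- fst (h (- t)), snd (h (- t)))"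

lemma norm_mirror: "norm (mirror h t) = norm (h (- t))"
  by (simp add: mirror_def norm_prod_def)

lemma has_vector_derivative_mirror:
  assumes "(h has_vector_derivative v) (at (- t) within S)"
  shows "(mirror h has_vector_derivative (fst v, - snd v)) (at t within uminus ` S)"
proof -
  have "(uminus has_vector_derivative - 1) (at t within uminus ` S)"
    using has_vector_derivative_minus[OF has_vector_derivative_id] by simp
  moreover have "(h has_vector_derivative v) (at (- t) within uminus ` uminus ` S)"
    using assms by (simp add: image_image)
  ultimately have "((h \<circ> uminus) has_vector_derivative (- 1) *\<^sub>R v) (at t within uminus ` S)"
    by (rule vector_diff_chain_within)
  then have reversed: "((\<lambda>s. h (- s)) has_vector_derivative - v) (at t within uminus ` S)"
    by (simp add: o_def)
  show ?thesis
    unfolding mirror_def[abs_def]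
    using has_vector_derivative_Pair[OF has_vector_derivative_minus
        [OF bounded_linear.has_vector_derivative[OF bounded_linear_fst reversed]]
        bounded_linear.has_vector_derivative[OF bounded_linear_snd reversed]]
    by simp
qed

lemma is_interval_segment: "is_interval I \<Longrightarrow> s \<in> I \<Longrightarrow> t \<in> I \<Longrightarrow> {s..t} \<subseteq> (I :: real set)"
  by (meson atLeastAtMost_iff is_interval_1 subsetI)

lemma last_zero_in_segment:
  fixes f :: "real \<Rightarrow> real"
  assumes "p \<le> q" "continuous_on {p..q} f" "f p \<le> 0" "0 < f q"
  obtains al where "p \<le> al" "al < q" "f al = 0" "\<And>t. al < t \<Longrightarrow> t \<le> q \<Longrightarrow> 0 < f t"
proof -
  have zero_after: "\<exists>s. t \<le> s \<and> s \<le> q \<and> f s = 0" if "p \<le> t" "t \<le> q" "f t \<le> 0" for t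
    using IVT'[of f t 0 q] that assms(4) continuous_on_subset[OF assms(2), of "{t..q}"] by auto
  define S where "S = {p..q} \<inter> f -` {0}"
  have "S \<noteq> {}"
    using zero_after[OF order_refl assms(1,3)] assms(1) unfolding S_def by auto
  moreover have "bdd_above S"
    unfolding S_def by (rule bdd_aboveI[of _ q]) auto
  moreover have "closed S"
    unfolding S_def using assms(2) by (rule continuous_closed_preimage) auto
  ultimately have "Sup S \<in> S"
    by (rule closed_contains_Sup)
  then have al: "p \<le> Sup S" "Sup S \<le> q" "f (Sup S) = 0"
    unfolding S_def by auto
  show thesis
  proof (rule that[OF al(1) _ al(3)])
    show "Sup S < q"
      using al(2,3) assms(4) by (cases "Sup S = q") auto
    show "0 < f t" if t: "Sup S < t" "t \<le> q" for t
    proof (rule ccontr)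
      assume "\<not> 0 < f t"
      then obtain s where "t \<le> s" "s \<le> q" "f s = 0"
        using zero_after[of t] t al(1) by auto
      then have "s \<le> Sup S"
        using \<open>bdd_above S\<close> al(1) t(1) by (intro cSup_upper) (auto simp: S_def)
      with t(1) \<open>t \<le> s\<close> show False
        by simp
    qed
  qed
qed

lemma last_zero_before:
  fixes f :: "real \<Rightarrow> real"
  assumes "is_interval I" "continuous_on I f" "tm \<in> I" "0 < f tm"
  obtains "\<And>t. t \<in> I \<Longrightarrow> t \<le> tm \<Longrightarrow> 0 < f t"
    | al where "al \<in> I" "al < tm" "f al = 0" "\<And>t. al < t \<Longrightarrow> t \<le> tm \<Longrightarrow> 0 < f t"
proof (cases "\<forall>t\<in>I. t \<le> tm \<longrightarrow> 0 < f t")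
  case True
  then show ?thesis
    using that(1) by blast
next
  case False
  then obtain p where "p \<in> I" "p \<le> tm" "f p \<le> 0"
    by auto
  moreover have segment: "{p..tm} \<subseteq> I"
    using assms(1) \<open>p \<in> I\<close> assms(3) by (rule is_interval_segment)
  ultimately obtain al where "p \<le> al" "al < tm" "f al = 0" "\<And>t. al < t \<Longrightarrow> t \<le> tm \<Longrightarrow> 0 < f t"
    using last_zero_in_segment[of p tm f] continuous_on_subset[OF assms(2) segment] assms(4) by blast
  moreover have "al \<in> I"
    using segment \<open>p \<le> al\<close> \<open>al < tm\<close> by auto
  ultimately show ?thesis
    using that(2) by blast
qed

lemma first_zero_after:
  fixes f :: "real \<Rightarrow> real"
  assumes "is_interval I" "continuous_on I f" "tm \<in> I" "0 < f tm"
  obtains "\<And>t. t \<in> I \<Longrightarrow> tm \<le> t \<Longrightarrow> 0 < f t"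
    | be where "be \<in> I" "tm < be" "f be = 0" "\<And>t. tm \<le> t \<Longrightarrow> t < be \<Longrightarrow> 0 < f t"
proof -
  note positive = that(1) and zero = that(2)
  have "is_interval (uminus ` I)"
    using assms(1) by simp
  moreover have "continuous_on (uminus ` I) (\<lambda>t. f (- t))"
    by (intro continuous_on_compose2[OF assms(2)] continuous_intros) auto
  moreover have "- tm \<in> uminus ` I" "0 < f (- (- tm))"
    using assms(3,4) by auto
  ultimately show thesis
  proof (rule last_zero_before[where f = "\<lambda>t. f (- t)"])
    assume pos: "\<And>t. t \<in> uminus ` I \<Longrightarrow> t \<le> - tm \<Longrightarrow> 0 < f (- t)"
    show thesis
    proof (rule positive)
      show "0 < f t" if "t \<in> I" "tm \<le> t" for t
        using pos[of "- t"] that by auto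
    qed
  next
    fix al
    assume al: "al \<in> uminus ` I" "al < - tm" "f (- al) = 0"
      and pos: "\<And>t. al < t \<Longrightarrow> t \<le> - tm \<Longrightarrow> 0 < f (- t)"
    show thesis
    proof (rule zero[of "- al"])
      show "0 < f t" if "tm \<le> t" "t < - al" for t
        using pos[of "- t"] that by auto
    qed (use al in auto)
  qed
qed

lemma le_if_le_minus_small_squares:
  fixes A R Y Z :: real
  assumes "0 < A" "0 < R" "\<And>h. 0 < h \<Longrightarrow> h < A \<Longrightarrow> Z - h\<^sup>2 / (2 * R) \<le> Y"
  shows "Z \<le> Y"
proof (rule tendsto_upperbound)
  have "((\<lambda>h. Z - h\<^sup>2 / (2 * R)) \<longlongrightarrow> Z - 0\<^sup>2 / (2 * R)) (at_right 0)"
    by (intro tendsto_intros tendsto_ident_at) (use assms(2) in auto)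
  then show "((\<lambda>h. Z - h\<^sup>2 / (2 * R)) \<longlongrightarrow> Z) (at_right 0)"
    by simp
  show "\<forall>\<^sub>F h in at_right 0. Z - h\<^sup>2 / (2 * R) \<le> Y"
    using eventually_at_right_real[OF assms(1)] by eventually_elim (use assms(3) in auto)
qed simp

text \<open>Between any two parameters the tangent turns by an angle in \<open>(0, \<pi>]\<close>: the sine of the
  angle has the sign of the determinant and, where it vanishes, the cosine is negative.\<close>

definition turns_at_most_pi :: "(real \<Rightarrow> real \<times> real) \<Rightarrow> real \<Rightarrow> real \<Rightarrow> bool" where
  "turns_at_most_pi g1 a b \<longleftrightarrow> (\<forall>s t. a \<le> s \<longrightarrow> s < t \<longrightarrow> t \<le> b \<longrightarrow>
     0 \<le> det2 (g1 s) (g1 t) \<and> (det2 (g1 s) (g1 t) = 0 \<longrightarrow> g1 s \<bullet> g1 t < 0))"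

definition closed_or_short_arc :: "(real \<Rightarrow> real \<times> real) \<Rightarrow> (real \<Rightarrow> real \<times> real) \<Rightarrow> real set \<Rightarrow> bool" where
  "closed_or_short_arc g g1 I \<longleftrightarrow>
     (I = UNIV \<and> (\<exists>P>0. \<forall>t. g (t + P) = g t)) \<or> (\<exists>a b. a < b \<and> I = {a..b} \<and> turns_at_most_pi g1 a b)"

lemma closed_or_short_arc_neg:
  "closed_or_short_arc g g1 I \<Longrightarrow> closed_or_short_arc (\<lambda>t. - g t) (\<lambda>t. - g1 t) I"
  unfolding closed_or_short_arc_def turns_at_most_pi_def by (simp add: det2_def)

lemma closed_or_short_arc_mirror:
  assumes "closed_or_short_arc g g1 I"
  shows "closed_or_short_arc (mirror g) (\<lambda>t. - mirror g1 t) (uminus ` I)"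
proof -
  from assms consider (closed) P where "I = UNIV" "0 < P" "\<forall>t. g (t + P) = g t"
    | (arc) a b where "a < b" "I = {a..b}" "turns_at_most_pi g1 a b"
    unfolding closed_or_short_arc_def by blast
  then show ?thesis
  proof cases
    case (closed P)
    note I = closed(1) and P = closed(2,3)
    have "g (- t - P) = g (- t)" for t
      using P(2)[rule_format, of "- t - P"] by simp
    then have "\<forall>t. mirror g (t + P) = mirror g t"
      by (simp add: mirror_def)
    then show ?thesis
      using I P(1) unfolding closed_or_short_arc_def by auto
  next
    case (arc a b)
    have "turns_at_most_pi (\<lambda>t. - mirror g1 t) (- b) (- a)"
      unfolding turns_at_most_pi_def
    proof (intro allI impI)
      fix s t
      assume "- b \<le> s" "s < t" "t \<le> - a"
      then have "a \<le> - t" "- t < - s" "- s \<le> b"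
        by auto
      then have "0 \<le> det2 (g1 (- t)) (g1 (- s)) \<and>
          (det2 (g1 (- t)) (g1 (- s)) = 0 \<longrightarrow> g1 (- t) \<bullet> g1 (- s) < 0)"
        using arc(3) unfolding turns_at_most_pi_def by blast
      then show "0 \<le> det2 (- mirror g1 s) (- mirror g1 t) \<and>
          (det2 (- mirror g1 s) (- mirror g1 t) = 0 \<longrightarrow> - mirror g1 s \<bullet> - mirror g1 t < 0)"
        by (simp add: mirror_def det2_def inner_real_pair algebra_simps)
    qed
    then show ?thesis
      using arc(1,2) unfolding closed_or_short_arc_def by auto
  qed
qed

lemma parabola_sandwich:
  fixes R Y ya ym sa sm xa xm X :: real
  assumes "0 < R" "xa < xm" "xm \<le> X" "sa \<le> sm"
    and "ym + sm * (X - xm) + (X - xm)\<^sup>2 / (2 * R) \<le> Y"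
    and "Y \<le> ya + sa * (X - xa) - (X - xa)\<^sup>2 / (2 * R)"
  shows "ym + sm * (xa - xm) + (xa - xm)\<^sup>2 / (2 * R) \<le> ya"
proof -
  have "sa * (X - xa) \<le> sm * (X - xa)"
    using assms(2-4) by (intro mult_right_mono) auto
  moreover have "(xm - xa)\<^sup>2 \<le> (X - xa)\<^sup>2"
    using assms(2,3) by (intro power_mono) auto
  then have "(xa - xm)\<^sup>2 / (2 * R) \<le> (X - xa)\<^sup>2 / (2 * R)"
    using assms(1) by (simp add: power2_commute divide_right_mono)
  moreover have "0 \<le> (X - xm)\<^sup>2 / (2 * R)"
    using assms(1) by simp
  moreover have "sm * (X - xa) = sm * (X - xm) - sm * (xa - xm)"
    by (simp add: algebra_simps)
  ultimately show ?thesis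
    using assms(5,6) by linarith
qed

locale radius_bounded_convex_curve =
  fixes g g1 g2 :: "real \<Rightarrow> real \<times> real" and I :: "real set" and R :: real
  assumes interval: "is_interval I"
    and deriv1: "\<And>t. t \<in> I \<Longrightarrow> (g has_vector_derivative g1 t) (at t within I)"
    and deriv2: "\<And>t. t \<in> I \<Longrightarrow> (g1 has_vector_derivative g2 t) (at t within I)"
    and det2_pos: "\<And>t. t \<in> I \<Longrightarrow> 0 < det2 (g1 t) (g2 t)"
    and radius_pos: "0 < R"
    and radius_bound: "\<And>t. t \<in> I \<Longrightarrow> norm (g1 t) ^ 3 \<le> R * det2 (g1 t) (g2 t)"
    and left_of_tangents: "\<And>s t. s \<in> I \<Longrightarrow> t \<in> I \<Longrightarrow> 0 \<le> det2 (g1 t) (g s - g t)"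
begin

definition "x t = fst (g t)"
definition "y t = snd (g t)"
definition "xd t = fst (g1 t)"
definition "yd t = snd (g1 t)"
definition "xdd t = fst (g2 t)"
definition "ydd t = snd (g2 t)"
definition "slope t = yd t / xd t"

text \<open>The parabola with vertical axis and curvature \<open>1/R\<close> at the point of contact, tangent to the
  curve at \<open>g t\<close> (where \<open>xd t \<noteq> 0\<close>).\<close>

definition "parabola t X = y t + slope t * (X - x t) + (X - x t)\<^sup>2 / (2 * R)"

lemma
  assumes "t \<in> I"
  shows x_deriv: "(x has_real_derivative xd t) (at t within I)"
    and y_deriv: "(y has_real_derivative yd t) (at t within I)"
    and xd_deriv: "(xd has_real_derivative xdd t) (at t within I)"
    and yd_deriv: "(yd has_real_derivative ydd t) (at t within I)"
  using has_real_derivative_components[OF deriv1[OF assms]] has_real_derivative_components[OF deriv2[OF assms]]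
  unfolding x_def[abs_def] y_def[abs_def] xd_def[abs_def] yd_def[abs_def] xdd_def ydd_def by auto

lemma continuous_on_x: "continuous_on I x"
  using x_deriv by (rule DERIV_continuous_on)

lemma continuous_on_xd: "continuous_on I xd"
  using xd_deriv by (rule DERIV_continuous_on)

lemma det2_pos_coords: "t \<in> I \<Longrightarrow> 0 < xd t * ydd t - yd t * xdd t"
  using det2_pos by (simp add: det2_def xd_def yd_def xdd_def ydd_def)

lemma left_of_tangents_coords: "s \<in> I \<Longrightarrow> t \<in> I \<Longrightarrow> 0 \<le> xd t * (y s - y t) - yd t * (x s - x t)"
  using left_of_tangents by (simp add: det2_def x_def y_def xd_def yd_def)

lemma radius_bound_coords:
  assumes "t \<in> I"
  shows "\<bar>xd t\<bar> ^ 3 \<le> R * (xd t * ydd t - yd t * xdd t)"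
proof -
  have "\<bar>xd t\<bar> ^ 3 \<le> norm (g1 t) ^ 3"
    unfolding xd_def by (intro power_mono) (auto simp: abs_fst_le_norm)
  also have "\<dots> \<le> R * (xd t * ydd t - yd t * xdd t)"
    using radius_bound[OF assms] by (simp add: det2_def xd_def yd_def xdd_def ydd_def)
  finally show ?thesis .
qed

lemma segment_subset: "s \<in> I \<Longrightarrow> t \<in> I \<Longrightarrow> {s..t} \<subseteq> I"
  using interval by (rule is_interval_segment)

lemma at_within_eq_at:
  assumes "s \<in> I" "t \<in> I" "u \<in> {s<..<t}"
  shows "at u within I = at u"
proof -
  have "{s<..<t} \<subseteq> interior I"
    using segment_subset[OF assms(1,2)] by (intro interior_maximal) auto
  with assms(3) show ?thesis
    by (intro at_within_interior) auto
qed

lemma increasing_on_segment: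
  assumes "p \<in> I" "q \<in> I" "p \<le> q"
    and "\<And>t. t \<in> {p..q} \<Longrightarrow> (f has_real_derivative D t) (at t within I)"
    and "\<And>t. t \<in> {p<..<q} \<Longrightarrow> 0 \<le> D t"
  shows "f p \<le> f q"
proof (rule DERIV_nonneg_imp_increasing_open[OF assms(3)])
  fix t
  assume "p < t" "t < q"
  then show "\<exists>D. (f has_real_derivative D) (at t) \<and> 0 \<le> D"
    using assms(4,5)[of t] at_within_eq_at[OF assms(1,2), of t] by auto
next
  have "continuous (at t within {p..q}) f" if "t \<in> {p..q}" for t
    using DERIV_continuous[OF assms(4)[OF that]] segment_subset[OF assms(1,2)]
    by (rule continuous_within_subset)
  then show "continuous_on {p..q} f"
    by (simp add: continuous_on_eq_continuous_within)
qed

lemma x_strict_mono: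
  assumes "p \<in> I" "q \<in> I" "p < q" "\<And>t. t \<in> {p<..<q} \<Longrightarrow> 0 < xd t"
  shows "x p < x q"
proof (rule DERIV_pos_imp_increasing_open[OF assms(3)])
  fix t
  assume "p < t" "t < q"
  moreover have "t \<in> I"
    using segment_subset[OF assms(1,2)] \<open>p < t\<close> \<open>t < q\<close> by auto
  ultimately show "\<exists>D. (x has_real_derivative D) (at t) \<and> 0 < D"
    using x_deriv[of t] assms(4)[of t] at_within_eq_at[OF assms(1,2), of t] by auto
next
  show "continuous_on {p..q} x"
    using continuous_on_x segment_subset[OF assms(1,2)] by (rule continuous_on_subset)
qed

lemma x_mono:
  assumes "p \<in> I" "q \<in> I" "p \<le> q" "\<And>t. t \<in> {p<..<q} \<Longrightarrow> 0 < xd t"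
  shows "x p \<le> x q"
  using x_strict_mono[OF assms(1,2) _ assms(4)] assms(3) by (cases "p = q") auto

text \<open>Where the curve is a graph, a radius of curvature at most \<open>R\<close> means that \<open>slope - x / R\<close>
  increases.\<close>

lemma slope_increase:
  assumes "p \<in> I" "q \<in> I" "p \<le> q" "\<And>t. t \<in> {p..q} \<Longrightarrow> 0 < xd t"
  shows "slope p + (x q - x p) / R \<le> slope q"
proof -
  define G where "G t = slope t - x t / R" for t
  have "G p \<le> G q"
  proof (rule increasing_on_segment[OF assms(1-3)])
    fix t
    assume "t \<in> {p..q}"
    then have t: "t \<in> I" "0 < xd t"
      using segment_subset[OF assms(1,2)] assms(4) by auto
    show "(G has_real_derivative (xd t * ydd t - yd t * xdd t) / (xd t)\<^sup>2 - xd t / R) (at t within I)"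
      unfolding G_def[abs_def] slope_def
      using t radius_pos by (auto intro!: derivative_eq_intros x_deriv y_deriv xd_deriv yd_deriv
          simp: power2_eq_square field_simps)
  next
    fix t
    assume "t \<in> {p<..<q}"
    then have t: "t \<in> I" "0 < xd t"
      using segment_subset[OF assms(1,2)] assms(4) by auto
    have "xd t * (xd t)\<^sup>2 \<le> R * (xd t * ydd t - yd t * xdd t)"
      using radius_bound_coords[OF t(1)] t(2) by (simp add: power3_eq_cube power2_eq_square)
    then show "0 \<le> (xd t * ydd t - yd t * xdd t) / (xd t)\<^sup>2 - xd t / R"
      using t(2) radius_pos by (simp add: field_simps)
  qed
  then show ?thesis
    unfolding G_def diff_divide_distrib by linarith
qed

lemma parabola_le_after:
  assumes "u \<in> I" "v \<in> I" "u < v" "\<And>t. t \<in> {u..<v} \<Longrightarrow> 0 < xd t"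
  shows "parabola u (x v) \<le> y v"
proof -
  define F where "F t = y t - parabola u (x t)" for t
  have "F u \<le> F v"
  proof (rule increasing_on_segment[OF assms(1,2)])
    show "u \<le> v"
      using assms(3) by simp
    fix t
    assume "t \<in> {u..v}"
    then have "t \<in> I"
      using segment_subset[OF assms(1,2)] by auto
    then show "(F has_real_derivative yd t - slope u * xd t - (x t - x u) * xd t / R) (at t within I)"
      unfolding F_def[abs_def] parabola_def
      using radius_pos by (auto intro!: derivative_eq_intros x_deriv y_deriv simp: field_simps)
  next
    fix t
    assume "t \<in> {u<..<v}"
    then have t: "t \<in> I" "0 < xd t"
      using segment_subset[OF assms(1,2)] assms(4) by auto
    have "slope u + (x t - x u) / R \<le> slope t"
      using \<open>t \<in> {u<..<v}\<close> assms(4) by (intro slope_increase[OF assms(1) t(1)]) auto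
    moreover have "yd t - slope u * xd t - (x t - x u) * xd t / R = xd t * (slope t - slope u - (x t - x u) / R)"
      using t(2) unfolding slope_def by (simp add: field_simps)
    ultimately show "0 \<le> yd t - slope u * xd t - (x t - x u) * xd t / R"
      using t(2) by simp
  qed
  then show ?thesis
    unfolding F_def parabola_def by simp
qed

lemma mirror_curve: "radius_bounded_convex_curve (mirror g) (\<lambda>t. - mirror g1 t) (mirror g2) (uminus ` I) R"
proof
  show "is_interval (uminus ` I)"
    using interval by simp
  show "0 < R"
    by (rule radius_pos)
  show "(mirror g has_vector_derivative - mirror g1 t) (at t within uminus ` I)" if "t \<in> uminus ` I" for t
    using has_vector_derivative_mirror[OF deriv1, of t] that by (auto simp: mirror_def)
  show "((\<lambda>t. - mirror g1 t) has_vector_derivative mirror g2 t) (at t within uminus ` I)" if "t \<in> uminus ` I" for t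
    using has_vector_derivative_minus[OF has_vector_derivative_mirror[OF deriv2, of t]] that
    by (auto simp: mirror_def)
  show "0 < det2 (- mirror g1 t) (mirror g2 t)" if "t \<in> uminus ` I" for t
    using det2_pos[of "- t"] that by (auto simp: mirror_def det2_def)
  show "norm (- mirror g1 t) ^ 3 \<le> R * det2 (- mirror g1 t) (mirror g2 t)" if "t \<in> uminus ` I" for t
  proof -
    have "norm (- mirror g1 t) = norm (g1 (- t))"
      by (simp only: norm_minus_cancel norm_mirror)
    then show ?thesis
      using radius_bound[of "- t"] that by (auto simp: mirror_def det2_def)
  qed
  show "0 \<le> det2 (- mirror g1 t) (mirror g s - mirror g t)" if "s \<in> uminus ` I" "t \<in> uminus ` I" for s t
    using left_of_tangents[of "- s" "- t"] that by (auto simp: mirror_def det2_def algebra_simps)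
qed

lemma mirror_coords:
  "radius_bounded_convex_curve.x (mirror g) t = - x (- t)"
  "radius_bounded_convex_curve.y (mirror g) t = y (- t)"
  "radius_bounded_convex_curve.xd (\<lambda>t. - mirror g1 t) t = xd (- t)"
  "radius_bounded_convex_curve.slope (\<lambda>t. - mirror g1 t) t = - slope (- t)"
  "radius_bounded_convex_curve.parabola (mirror g) (\<lambda>t. - mirror g1 t) R t X = parabola (- t) (- X)"
proof -
  interpret m: radius_bounded_convex_curve "mirror g" "\<lambda>t. - mirror g1 t" "mirror g2" "uminus ` I" R
    by (rule mirror_curve)
  show "m.x t = - x (- t)" "m.y t = y (- t)" "m.xd t = xd (- t)" "m.slope t = - slope (- t)"
    unfolding m.x_def m.y_def m.xd_def m.yd_def m.slope_def
    by (simp_all add: x_def y_def xd_def yd_def slope_def mirror_def)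
  then show "m.parabola t X = parabola (- t) (- X)"
    by (simp add: m.parabola_def parabola_def power2_eq_square algebra_simps)
qed

lemma parabola_le_before:
  assumes "u \<in> I" "v \<in> I" "v < u" "\<And>t. t \<in> {v<..u} \<Longrightarrow> 0 < xd t"
  shows "parabola u (x v) \<le> y v"
proof -
  interpret m: radius_bounded_convex_curve "mirror g" "\<lambda>t. - mirror g1 t" "mirror g2" "uminus ` I" R
    by (rule mirror_curve)
  have "m.parabola (- u) (m.x (- v)) \<le> m.y (- v)"
    using assms by (intro m.parabola_le_after) (auto simp: mirror_coords)
  then show ?thesis
    by (simp add: mirror_coords)
qed

lemma neg_curve: "radius_bounded_convex_curve (\<lambda>t. - g t) (\<lambda>t. - g1 t) (\<lambda>t. - g2 t) I R"
  using deriv1 deriv2 det2_pos radius_bound left_of_tangents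
  by unfold_locales (auto simp: interval radius_pos det2_def algebra_simps
      intro: has_vector_derivative_minus)

lemma neg_coords:
  "radius_bounded_convex_curve.x (\<lambda>t. - g t) t = - x t"
  "radius_bounded_convex_curve.y (\<lambda>t. - g t) t = - y t"
  "radius_bounded_convex_curve.xd (\<lambda>t. - g1 t) t = - xd t"
  "radius_bounded_convex_curve.slope (\<lambda>t. - g1 t) t = slope t"
proof -
  interpret n: radius_bounded_convex_curve "\<lambda>t. - g t" "\<lambda>t. - g1 t" "\<lambda>t. - g2 t" I R
    by (rule neg_curve)
  show "n.x t = - x t" "n.y t = - y t" "n.xd t = - xd t" "n.slope t = slope t"
    unfolding n.x_def n.y_def n.xd_def n.yd_def n.slope_def
    by (simp_all add: x_def y_def xd_def yd_def slope_def)
qed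

lemma y_le_parabola_before_leftward:
  assumes "u \<in> I" "v \<in> I" "v < u" "\<And>t. t \<in> {v<..u} \<Longrightarrow> xd t < 0"
  shows "y v \<le> y u + slope u * (x v - x u) - (x v - x u)\<^sup>2 / (2 * R)"
proof -
  interpret n: radius_bounded_convex_curve "\<lambda>t. - g t" "\<lambda>t. - g1 t" "\<lambda>t. - g2 t" I R
    by (rule neg_curve)
  have "n.parabola u (n.x v) \<le> n.y v"
    using assms by (intro n.parabola_le_before) (auto simp: neg_coords)
  then show ?thesis
    unfolding n.parabola_def neg_coords by (simp add: power2_commute algebra_simps)
qed

lemma vertical_tangent:
  assumes "t \<in> I" "xd t = 0"
  shows "yd t \<noteq> 0" "\<And>s. s \<in> I \<Longrightarrow> yd t * (x s - x t) \<le> 0"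
  using det2_pos_coords[OF assms(1)] left_of_tangents_coords[OF _ assms(1)] assms(2) by auto

lemma vertical_tangent_leftmost:
  assumes "t \<in> I" "xd t = 0" "r \<in> I" "x t < x r" "s \<in> I"
  shows "x t \<le> x s"
proof -
  have "yd t < 0"
    using vertical_tangent[OF assms(1,2)] assms(3,4) by (force simp: mult_le_0_iff)
  then show ?thesis
    using vertical_tangent(2)[OF assms(1,2,5)] by (simp add: mult_le_0_iff)
qed

lemma vertical_tangent_rightmost:
  assumes "t \<in> I" "xd t = 0" "r \<in> I" "x r < x t"
  shows "0 < yd t" "\<And>s. s \<in> I \<Longrightarrow> x s \<le> x t"
proof -
  show "0 < yd t"
    using vertical_tangent[OF assms(1,2)] assms(3,4) by (force simp: mult_le_0_iff)
  then show "x s \<le> x t" if "s \<in> I" for s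
    using vertical_tangent(2)[OF assms(1,2) that] by (simp add: mult_le_0_iff)
qed

lemma parabola_le_over_graph:
  assumes "al \<in> I" "tm \<in> I" "ta \<in> I" "al < tm" "\<And>t. al < t \<Longrightarrow> t \<le> tm \<Longrightarrow> 0 < xd t"
    and "x al \<le> x ta" "x ta < x tm"
  shows "parabola tm (x ta) \<le> y ta"
proof (rule le_if_le_minus_small_squares)
  show "0 < x tm - x ta" "0 < R"
    using assms(7) radius_pos by auto
  fix h
  assume h: "0 < h" "h < x tm - x ta"
  have "continuous_on {al..tm} x"
    using continuous_on_x segment_subset[OF assms(1,2)] by (rule continuous_on_subset)
  then obtain s where s: "al \<le> s" "s \<le> tm" "x s = x ta + h"
    using IVT'[of x al "x ta + h" tm] assms(4,6) h by auto
  have "s \<noteq> al" "s \<noteq> tm"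
    using s(3) assms(6) h by auto
  with s have "al < s" "s < tm"
    by auto
  then have s_I: "s \<in> I" and "0 < xd s"
    using segment_subset[OF assms(1,2)] assms(5) by auto
  text \<open>\<open>g ta\<close> lies above the tangent at \<open>g s\<close> and \<open>g s\<close> above the parabola; combining the
    two bounds costs only \<open>h\<^sup>2 / (2 R)\<close>, which vanishes as \<open>h \<rightarrow> 0\<close>.\<close>
  have tangent: "y s - slope s * h \<le> y ta"
  proof -
    have "0 \<le> xd s * (y ta - y s + slope s * h)"
      using left_of_tangents_coords[OF assms(3) s_I] s(3) \<open>0 < xd s\<close>
      unfolding slope_def by (simp add: algebra_simps)
    then show ?thesis
      using \<open>0 < xd s\<close> by (simp add: zero_le_mult_iff)
  qed
  have "slope s + (x tm - x s) / R \<le> slope tm"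
    using \<open>al < s\<close> \<open>s < tm\<close> assms(5) by (intro slope_increase[OF s_I assms(2)]) auto
  then have "slope s * h \<le> (slope tm - (x tm - x s) / R) * h"
    using h(1) by (intro mult_right_mono) auto
  moreover have "parabola tm (x s) \<le> y s"
    using \<open>al < s\<close> \<open>s < tm\<close> assms(5) by (intro parabola_le_before[OF assms(2) s_I]) auto
  moreover have "parabola tm (x ta) - h\<^sup>2 / (2 * R) = parabola tm (x s) - (slope tm - (x tm - x s) / R) * h"
    using s(3) radius_pos unfolding parabola_def by (simp add: field_simps power2_eq_square)
  ultimately show "parabola tm (x ta) - h\<^sup>2 / (2 * R) \<le> y ta"
    using tangent by linarith
qed

lemma turning_coords:
  assumes "turns_at_most_pi g1 a b" "a \<le> s" "s < t" "t \<le> b"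
  shows "0 \<le> xd s * yd t - yd s * xd t"
    and "xd s * yd t - yd s * xd t = 0 \<Longrightarrow> xd s * xd t + yd s * yd t < 0"
  using assms unfolding turns_at_most_pi_def det2_def inner_real_pair xd_def yd_def by auto

text \<open>Past a vertical tangent the tangent has turned by more than \<open>\<pi>/2\<close> and, turning by at
  most \<open>\<pi>\<close>, cannot return to the right half plane.\<close>

lemma xd_neg_beyond_vertical:
  assumes turn: "turns_at_most_pi g1 a b" and "a \<le> be" "be < t" "t \<le> b"
    and "0 < xd a" "xd be = 0" "0 < yd be"
  shows "xd t < 0"
proof -
  have "yd be * xd t \<le> 0"
    using turning_coords(1)[OF turn assms(2-4)] assms(6) by simp
  then have "xd t \<le> 0"
    using assms(7) by (simp add: mult_le_0_iff)
  moreover have "xd t \<noteq> 0"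
  proof
    assume "xd t = 0"
    then have "yd be * yd t < 0"
      using turning_coords(2)[OF turn assms(2-4)] assms(6) by simp
    then have "yd t < 0"
      using assms(7) by (simp add: mult_less_0_iff)
    moreover have "0 \<le> xd a * yd t"
      using turning_coords(1)[OF turn, of a t] \<open>xd t = 0\<close> assms(2,3,4) by simp
    ultimately show False
      using assms(5) by (simp add: zero_le_mult_iff)
  qed
  ultimately show ?thesis
    by simp
qed

lemma slope_le_if_turned_back:
  assumes "turns_at_most_pi g1 a b" "a \<le> s" "s < t" "t \<le> b" "0 < xd s" "xd t < 0"
  shows "slope t \<le> slope s"
proof -
  have "0 \<le> xd s * yd t - yd s * xd t"
    by (rule turning_coords(1)[OF assms(1-4)])
  also have "xd s * yd t - yd s * xd t = (slope t - slope s) * (xd s * xd t)"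
    using assms(5,6) unfolding slope_def by (simp add: field_simps)
  finally show ?thesis
    using assms(5,6) by (simp add: zero_le_mult_iff)
qed

lemma parabola_le_beyond_vertical:
  assumes turn: "turns_at_most_pi g1 a b" and I: "I = {a..b}"
    and "ta \<in> I" "tm \<in> I" "be \<in> I" "tm < be" "xd be = 0"
    and pos: "\<And>t. a \<le> t \<Longrightarrow> t < be \<Longrightarrow> 0 < xd t"
    and "x ta < x a"
  shows "parabola tm (x ta) \<le> y ta"
proof -
  have a: "a \<in> I" "a \<le> tm" and "ta \<le> b" "be \<le> b"
    using I assms(3,4,5) by auto
  have "0 < xd a"
    using pos a(2) assms(6) by simp
  have "x tm < x be"
    using pos a(2) by (intro x_strict_mono[OF assms(4,5,6)]) auto
  have "x a \<le> x tm"
    using pos assms(6) by (intro x_mono[OF a(1) assms(4) a(2)]) auto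
  have "0 < yd be"
    using vertical_tangent_rightmost[OF assms(5,7,4) \<open>x tm < x be\<close>] by simp
  have "be < ta"
  proof (rule ccontr)
    assume "\<not> be < ta"
    then have "x a \<le> x ta"
      using pos I assms(3) by (intro x_mono[OF a(1) assms(3)]) auto
    with \<open>x ta < x a\<close> show False
      by simp
  qed
  have xd_neg: "xd t < 0" if "be < t" "t \<le> b" for t
    using xd_neg_beyond_vertical[OF turn _ that] a(2) assms(6,7) \<open>0 < xd a\<close> \<open>0 < yd be\<close> by simp
  have "slope ta \<le> slope a"
    using xd_neg \<open>be < ta\<close> \<open>ta \<le> b\<close> a(2) assms(6) \<open>0 < xd a\<close>
    by (intro slope_le_if_turned_back[OF turn]) auto
  also have "slope a \<le> slope tm"
  proof -
    have "slope a + (x tm - x a) / R \<le> slope tm"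
      using pos assms(6) by (intro slope_increase[OF a(1) assms(4) a(2)]) auto
    moreover have "0 \<le> (x tm - x a) / R"
      using \<open>x a \<le> x tm\<close> radius_pos by simp
    ultimately show ?thesis
      by linarith
  qed
  finally have "slope ta \<le> slope tm" .
  have "parabola tm (x be) \<le> y be"
    using pos a(2) by (intro parabola_le_after[OF assms(4,5,6)]) auto
  have "y be \<le> y ta + slope ta * (x be - x ta) - (x be - x ta)\<^sup>2 / (2 * R)"
    using xd_neg \<open>ta \<le> b\<close> by (intro y_le_parabola_before_leftward[OF assms(3,5) \<open>be < ta\<close>]) auto
  moreover have "x ta < x tm" "x tm \<le> x be"
    using \<open>x ta < x a\<close> \<open>x a \<le> x tm\<close> \<open>x tm < x be\<close> by auto
  ultimately show ?thesis
    using parabola_sandwich[OF radius_pos _ _ \<open>slope ta \<le> slope tm\<close>] \<open>parabola tm (x be) \<le> y be\<close>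
    unfolding parabola_def by blast
qed

lemma parabola_le_left_on_arc:
  assumes turn: "turns_at_most_pi g1 a b" and I: "I = {a..b}"
    and "ta \<in> I" "tm \<in> I" "x ta < x tm" and pos: "\<And>t. a \<le> t \<Longrightarrow> t \<le> tm \<Longrightarrow> 0 < xd t"
  shows "parabola tm (x ta) \<le> y ta"
proof (cases "x a \<le> x ta")
  case True
  moreover have "a \<in> I" "a \<le> tm"
    using I assms(4) by auto
  moreover have "a < tm"
    using True assms(5) \<open>a \<le> tm\<close> by (cases "a = tm") auto
  ultimately show ?thesis
    using pos assms(5) by (intro parabola_le_over_graph[OF _ assms(4,3)]) auto
next
  case False
  have "0 < xd tm"
    using pos assms(4) I by simp
  show ?thesis
    using interval continuous_on_xd assms(4) \<open>0 < xd tm\<close>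
  proof (rule first_zero_after)
    assume pos_right: "\<And>t. t \<in> I \<Longrightarrow> tm \<le> t \<Longrightarrow> 0 < xd t"
    have "0 < xd t" if "t \<in> I" for t
      using pos pos_right that I by (cases "t \<le> tm") auto
    then have "x a \<le> x ta"
      using I assms(3) by (intro x_mono[OF _ assms(3)]) auto
    with False show ?thesis
      by simp
  next
    fix be
    assume be: "be \<in> I" "tm < be" "xd be = 0" "\<And>t. tm \<le> t \<Longrightarrow> t < be \<Longrightarrow> 0 < xd t"
    show ?thesis
    proof (rule parabola_le_beyond_vertical[OF turn I assms(3,4) be(1-3)])
      show "0 < xd t" if "a \<le> t" "t < be" for t
        using pos[of t] be(4)[of t] that by (cases "t \<le> tm") auto
    qed (use False in simp)
  qed
qed

lemma parabola_le_left:
  assumes ext: "closed_or_short_arc g g1 I"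
    and "ta \<in> I" "tm \<in> I" "0 < xd tm" "x ta < x tm"
  shows "parabola tm (x ta) \<le> y ta"
  using interval continuous_on_xd assms(3,4)
proof (rule last_zero_before)
  fix al
  assume al: "al \<in> I" "al < tm" "xd al = 0" and pos: "\<And>t. al < t \<Longrightarrow> t \<le> tm \<Longrightarrow> 0 < xd t"
  have "x al < x tm"
    using pos by (intro x_strict_mono[OF al(1) assms(3) al(2)]) auto
  then have "x al \<le> x ta"
    by (rule vertical_tangent_leftmost[OF al(1,3) assms(3) _ assms(2)])
  then show ?thesis
    using pos assms(5) by (intro parabola_le_over_graph[OF al(1) assms(3,2) al(2)]) auto
next
  assume pos: "\<And>t. t \<in> I \<Longrightarrow> t \<le> tm \<Longrightarrow> 0 < xd t"
  from ext consider (closed) P where "I = UNIV" "0 < P" "\<forall>t. g (t + P) = g t"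
    | (arc) a b where "I = {a..b}" "turns_at_most_pi g1 a b"
    unfolding closed_or_short_arc_def by blast
  then show ?thesis
  proof cases
    case (closed P)
    have "x (tm - P) < x tm"
      using closed pos by (intro x_strict_mono) auto
    moreover have "x (tm - P) = x tm"
      using closed(3)[rule_format, of "tm - P"] by (simp add: x_def)
    ultimately show ?thesis
      by simp
  next
    case (arc a b)
    then show ?thesis
      using pos assms(3) by (intro parabola_le_left_on_arc[OF arc(2,1) assms(2,3,5)]) auto
  qed
qed

lemma parabola_le_right:
  assumes "closed_or_short_arc g g1 I" "tb \<in> I" "tm \<in> I" "0 < xd tm" "x tm < x tb"
  shows "parabola tm (x tb) \<le> y tb"
proof -
  interpret m: radius_bounded_convex_curve "mirror g" "\<lambda>t. - mirror g1 t" "mirror g2" "uminus ` I" R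
    by (rule mirror_curve)
  have "m.parabola (- tm) (m.x (- tb)) \<le> m.y (- tb)"
    using assms by (intro m.parabola_le_left closed_or_short_arc_mirror) (auto simp: mirror_coords)
  then show ?thesis
    by (simp add: mirror_coords)
qed

lemma slope_sign_at_flat_point:
  assumes "parabola t X \<le> Y" "2 * R * \<bar>Y - y t\<bar> < (X - x t)\<^sup>2"
  shows "slope t * (X - x t) < 0"
proof -
  define q where "q = (X - x t)\<^sup>2 / (2 * R)"
  have "(X - x t)\<^sup>2 = 2 * R * q"
    using radius_pos unfolding q_def by simp
  moreover have "2 * R * (Y - y t) \<le> 2 * R * \<bar>Y - y t\<bar>"
    using radius_pos by (intro mult_left_mono) auto
  ultimately have "2 * R * (Y - y t) < 2 * R * q"
    using assms(2) by linarith
  then have "Y - y t < q"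
    using radius_pos by simp
  with assms(1) show ?thesis
    unfolding parabola_def q_def by linarith
qed

lemma no_flat_triple_rightward:
  assumes "closed_or_short_arc g g1 I" "ta \<in> I" "tm \<in> I" "tb \<in> I" "0 < xd tm"
    and "x ta < x tm" "x tm < x tb"
    and "2 * R * \<bar>y ta - y tm\<bar> < (x ta - x tm)\<^sup>2" "2 * R * \<bar>y tb - y tm\<bar> < (x tb - x tm)\<^sup>2"
  shows False
proof -
  have "slope tm * (x ta - x tm) < 0"
    using parabola_le_left[OF assms(1,2,3,5,6)] assms(8) by (rule slope_sign_at_flat_point)
  moreover have "slope tm * (x tb - x tm) < 0"
    using parabola_le_right[OF assms(1,4,3,5,7)] assms(9) by (rule slope_sign_at_flat_point)
  ultimately show False
    using assms(6,7) by (simp add: mult_less_0_iff)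
qed

lemma no_flat_triple:
  assumes "closed_or_short_arc g g1 I" "ta \<in> I" "tm \<in> I" "tb \<in> I"
    and "x ta < x tm" "x tm < x tb"
    and "2 * R * \<bar>y ta - y tm\<bar> < (x ta - x tm)\<^sup>2" "2 * R * \<bar>y tb - y tm\<bar> < (x tb - x tm)\<^sup>2"
  shows False
proof -
  have "xd tm \<noteq> 0"
    using vertical_tangent_leftmost[OF assms(3) _ assms(4,6) assms(2)] assms(5) by fastforce
  then consider "0 < xd tm" | "xd tm < 0"
    by linarith
  then show False
  proof cases
    case 1
    then show False
      using no_flat_triple_rightward assms by blast
  next
    case 2
    interpret n: radius_bounded_convex_curve "\<lambda>t. - g t" "\<lambda>t. - g1 t" "\<lambda>t. - g2 t" I R
      by (rule neg_curve)
    show False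
      by (rule n.no_flat_triple_rightward[OF closed_or_short_arc_neg[OF assms(1)] assms(4,3,2)])
        (use assms 2 in \<open>auto simp: neg_coords abs_minus_commute power2_commute\<close>)
  qed
qed

lemma frame_curve:
  assumes "norm e = 1"
  shows "radius_bounded_convex_curve (\<lambda>t. frame e (g t)) (\<lambda>t. frame e (g1 t)) (\<lambda>t. frame e (g2 t)) I R"
proof -
  have bl: "bounded_linear (frame e)"
    using linear_frame linear_conv_bounded_linear by blast
  show ?thesis
  proof
    show "((\<lambda>t. frame e (g t)) has_vector_derivative frame e (g1 t)) (at t within I)" if "t \<in> I" for t
      by (rule bounded_linear.has_vector_derivative[OF bl deriv1[OF that]])
    show "((\<lambda>t. frame e (g1 t)) has_vector_derivative frame e (g2 t)) (at t within I)" if "t \<in> I" for t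
      by (rule bounded_linear.has_vector_derivative[OF bl deriv2[OF that]])
    show "0 < det2 (frame e (g1 t)) (frame e (g2 t))" if "t \<in> I" for t
      using det2_pos[OF that] det2_frame[OF assms] by simp
    show "norm (frame e (g1 t)) ^ 3 \<le> R * det2 (frame e (g1 t)) (frame e (g2 t))" if "t \<in> I" for t
      using radius_bound[OF that] det2_frame[OF assms] norm_frame[OF assms] by simp
    show "0 \<le> det2 (frame e (g1 t)) (frame e (g s) - frame e (g t))" if "s \<in> I" "t \<in> I" for s t
      using left_of_tangents[OF that] det2_frame[OF assms] linear_diff[OF linear_frame] by metis
  qed (use interval radius_pos in auto)
qed

lemma frame_coords:
  assumes "norm e = 1"
  shows "radius_bounded_convex_curve.x (\<lambda>t. frame e (g t)) t = e \<bullet> g t"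
    and "radius_bounded_convex_curve.y (\<lambda>t. frame e (g t)) t = det2 e (g t)"
proof -
  interpret f: radius_bounded_convex_curve "\<lambda>t. frame e (g t)" "\<lambda>t. frame e (g1 t)" "\<lambda>t. frame e (g2 t)" I R
    using assms by (rule frame_curve)
  show "f.x t = e \<bullet> g t" "f.y t = det2 e (g t)"
    unfolding f.x_def f.y_def by (simp_all add: frame_def)
qed

end

lemma closed_or_short_arc_frame:
  assumes "norm e = 1" "closed_or_short_arc g g1 I"
  shows "closed_or_short_arc (\<lambda>t. frame e (g t)) (\<lambda>t. frame e (g1 t)) I"
  using assms(2) unfolding closed_or_short_arc_def turns_at_most_pi_def
  by (simp add: det2_frame[OF assms(1)] inner_frame[OF assms(1)]) metis

section \<open>Closed convex curves and convex arcs\<close>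

lemma inner_det2_identity: "(u \<bullet> u) * (n \<bullet> v) = (n \<bullet> u) * (u \<bullet> v) + det2 u n * det2 u v"
  by (simp add: inner_real_pair det2_def algebra_simps)

lemma det2_nonneg_if_normal:
  assumes "n \<noteq> 0" "n \<bullet> u = 0" "n \<bullet> w \<le> 0" "0 < det2 u w" "n \<bullet> v \<le> 0"
  shows "0 \<le> det2 u v"
proof -
  have "u \<noteq> 0"
    using assms(4) by (auto simp: det2_def)
  then have N: "0 < u \<bullet> u"
    by simp
  have expand: "(u \<bullet> u) * (n \<bullet> p) = det2 u n * det2 u p" for p
    using inner_det2_identity[of u n p] assms(2) by simp
  have "det2 u n * det2 u w \<le> 0"
    using expand[of w] N assms(3) by (simp add: mult_nonneg_nonpos flip: expand)
  then have "det2 u n \<le> 0"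
    using assms(4) by (simp add: mult_le_0_iff)
  moreover have "det2 u n \<noteq> 0"
    using expand[of n] N assms(1) by auto
  moreover have "det2 u n * det2 u v \<le> 0"
    using expand[of v] N assms(5) by (simp add: mult_nonneg_nonpos flip: expand)
  ultimately show ?thesis
    by (simp add: mult_le_0_iff)
qed

lemma local_max_derivatives:
  fixes h h1 :: "real \<Rightarrow> real"
  assumes "0 < \<epsilon>"
    and deriv: "\<And>s. s \<in> ball t \<epsilon> \<Longrightarrow> (h has_real_derivative h1 s) (at s)"
    and "(h1 has_real_derivative c) (at t)"
    and max: "\<And>s. s \<in> ball t \<epsilon> \<Longrightarrow> h s \<le> h t"
  shows "h1 t = 0" "c \<le> 0"
proof -
  show h1: "h1 t = 0"
    using assms(1) max by (intro DERIV_local_max[OF deriv]) (auto simp: dist_real_def)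
  show "c \<le> 0"
  proof (rule ccontr)
    assume "\<not> c \<le> 0"
    then obtain d where "0 < d" and d: "\<And>k. 0 < k \<Longrightarrow> k < d \<Longrightarrow> h1 t < h1 (t + k)"
      using DERIV_pos_inc_right[OF assms(3)] by auto
    define k where "k = min d \<epsilon> / 2"
    have k: "0 < k" "k < d" "k < \<epsilon>"
      unfolding k_def using \<open>0 < d\<close> assms(1) by auto
    have "h t < h (t + k)"
    proof (rule DERIV_pos_imp_increasing_open[of t "t + k" h])
      show "t < t + k"
        using k by simp
    next
      fix s
      assume "t < s" "s < t + k"
      then show "\<exists>y. (h has_real_derivative y) (at s) \<and> 0 < y"
        using deriv[of s] d[of "s - t"] h1 k by (auto simp: dist_real_def)
    next
      have "continuous (at s) h" if "s \<in> {t..t + k}" for s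
        using deriv[of s] DERIV_continuous that k by (force simp: dist_real_def)
      then show "continuous_on {t..t + k} h"
        by (simp add: continuous_at_imp_continuous_on)
    qed
    moreover have "h (t + k) \<le> h t"
      using max[of "t + k"] k by (simp add: dist_real_def)
    ultimately show False
      by simp
  qed
qed

text \<open>At a point where the linear function \<open>n \<bullet> _\<close> is maximal on the curve, the tangent is
  orthogonal to \<open>n\<close>, and positive curvature puts the whole half plane \<open>n \<bullet> _ \<le> n \<bullet> g t\<close> to
  the left of the tangent.\<close>

lemma left_of_tangent_if_supported:
  fixes g g1 g2 :: "real \<Rightarrow> real \<times> real"
  assumes "0 < \<epsilon>"
    and "\<And>s. s \<in> ball t \<epsilon> \<Longrightarrow> (g has_vector_derivative g1 s) (at s)"
    and "(g1 has_vector_derivative g2 t) (at t)"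
    and "0 < det2 (g1 t) (g2 t)" "n \<noteq> 0"
    and "\<And>s. s \<in> ball t \<epsilon> \<Longrightarrow> n \<bullet> g s \<le> n \<bullet> g t" "n \<bullet> p \<le> n \<bullet> g t"
  shows "0 \<le> det2 (g1 t) (p - g t)"
proof -
  have inner_deriv: "((\<lambda>s. n \<bullet> f s) has_real_derivative n \<bullet> v) (at s)"
    if "(f has_vector_derivative v) (at s)" for f v s
    using bounded_linear.has_vector_derivative[OF bounded_linear_inner_right that]
    by (simp add: has_real_derivative_iff_has_vector_derivative)
  have "n \<bullet> g1 t = 0" "n \<bullet> g2 t \<le> 0"
    using local_max_derivatives[OF assms(1) inner_deriv[OF assms(2)] inner_deriv[OF assms(3)] assms(6)]
    by auto
  with assms(4,5,7) show ?thesis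
    by (intro det2_nonneg_if_normal[of n]) (auto simp: inner_diff_right)
qed

lemma frontier_supporting_normal:
  fixes K :: "(real \<times> real) set"
  assumes "convex K" "interior K \<noteq> {}" "p \<in> frontier K"
  obtains n where "n \<noteq> 0" "\<And>q. q \<in> closure K \<Longrightarrow> n \<bullet> q \<le> n \<bullet> p"
proof -
  have "p \<in> closure K" "p \<notin> rel_interior K"
    using assms(3) rel_interior_nonempty_interior[OF assms(2)] unfolding frontier_def by auto
  from supporting_hyperplane_relative_frontier[OF assms(1) this]
  obtain a where "a \<noteq> 0" "\<And>q. q \<in> closure K \<Longrightarrow> a \<bullet> p \<le> a \<bullet> q"
    by metis
  then show thesis
    by (intro that[of "- a"]) auto
qed

lemma left_of_tangent_on_frontier:
  fixes K :: "(real \<times> real) set" and g g1 g2 :: "real \<Rightarrow> real \<times> real"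
  assumes "convex K" "interior K \<noteq> {}" "g ` S \<subseteq> frontier K"
    and "0 < \<epsilon>" "ball t \<epsilon> \<subseteq> S" "s \<in> S"
    and "\<And>u. u \<in> ball t \<epsilon> \<Longrightarrow> (g has_vector_derivative g1 u) (at u)"
    and "(g1 has_vector_derivative g2 t) (at t)" "0 < det2 (g1 t) (g2 t)"
  shows "0 \<le> det2 (g1 t) (g s - g t)"
proof -
  have "g t \<in> frontier K"
    using assms(3-5) centre_in_ball[of t \<epsilon>] by blast
  then obtain n where n: "n \<noteq> 0" "\<And>q. q \<in> closure K \<Longrightarrow> n \<bullet> q \<le> n \<bullet> g t"
    using frontier_supporting_normal[OF assms(1,2)] by blast
  have "n \<bullet> g u \<le> n \<bullet> g t" if "u \<in> S" for u
    using n(2) assms(3) that unfolding frontier_def by blast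
  then show ?thesis
    using assms(5-9) n(1) by (intro left_of_tangent_if_supported[OF assms(4)]) auto
qed

lemma curvature_radius_bound:
  assumes "0 < curvature g1 g2 t" "g1 t \<noteq> 0" "1 / curvature g1 g2 t \<le> R"
  shows "0 < det2 (g1 t) (g2 t)" "norm (g1 t) ^ 3 \<le> R * det2 (g1 t) (g2 t)"
proof -
  have "0 < norm (g1 t) ^ 3"
    using assms(2) by simp
  then show det: "0 < det2 (g1 t) (g2 t)"
    using assms(1) unfolding curvature_def by (simp add: zero_less_divide_iff)
  have "norm (g1 t) ^ 3 / det2 (g1 t) (g2 t) \<le> R"
    using assms(3) unfolding curvature_def by simp
  then show "norm (g1 t) ^ 3 \<le> R * det2 (g1 t) (g2 t)"
    using det by (simp add: pos_divide_le_eq mult.commute)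
qed

lemma periodic_derivative:
  assumes "\<And>t. f (t + P) = f t" "\<And>t. (f has_vector_derivative f' t) (at t)"
  shows "f' (t + P) = (f' t :: 'a :: real_normed_vector)"
proof -
  have "((\<lambda>s. s + P) has_vector_derivative 1) (at t)"
    by (simp add: has_vector_derivative_add_const has_vector_derivative_id)
  then have "((f \<circ> (\<lambda>s. s + P)) has_vector_derivative 1 *\<^sub>R f' (t + P)) (at t)"
    using assms(2) by (rule vector_diff_chain_at)
  moreover have "f \<circ> (\<lambda>s. s + P) = f"
    using assms(1) by (simp add: fun_eq_iff)
  ultimately have "(f has_vector_derivative f' (t + P)) (at t)"
    by simp
  then show ?thesis
    using assms(2) vector_derivative_unique_at by metis
qed

lemma periodic_reduce:
  fixes f :: "real \<Rightarrow> 'a"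
  assumes "0 < P" "\<And>t. f (t + P) = f t"
  obtains t' where "a \<le> t'" "t' \<le> a + P" "f t = f t'"
proof -
  interpret periodic_fun_simple f P
    using assms(2) by unfold_locales
  define k where "k = \<lfloor>(t - a) / P\<rfloor>"
  have "real_of_int k * P \<le> t - a" "t - a < (real_of_int k + 1) * P"
    unfolding k_def using assms(1) floor_divide_lower floor_divide_upper by blast+
  moreover have "f t = f (t - real_of_int k * P)"
    using minus_of_int[of t k] by simp
  ultimately show thesis
    by (intro that[of "t - real_of_int k * P"]) (auto simp: algebra_simps)
qed

lemma closed_convex_curve_radius_bounded:
  assumes cc: "closed_convex_curve g g1 g2 a b"
    and rho: "\<forall>t\<in>{a..b}. 1 / curvature g1 g2 t \<le> R" and "0 < R"
  shows "radius_bounded_convex_curve g g1 g2 UNIV R" "closed_or_short_arc g g1 UNIV"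
proof -
  from cc have "a < b" and per: "\<And>t. g (t + (b - a)) = g t"
    and d1: "\<And>t. (g has_vector_derivative g1 t) (at t)"
    and d2: "\<And>t. (g1 has_vector_derivative g2 t) (at t)"
    and nz: "\<And>t. g1 t \<noteq> 0 \<and> g2 t \<noteq> 0 \<and> 0 < curvature g1 g2 t"
    unfolding closed_convex_curve_def by auto
  from cc obtain K where K: "convex K" "compact K" "interior K \<noteq> {}" "g ` {a..b} = frontier K"
    unfolding closed_convex_curve_def by auto
  define P where "P = b - a"
  have P: "0 < P" "\<And>t. g (t + P) = g t"
    using \<open>a < b\<close> per by (auto simp: P_def)
  have per1: "\<And>t. g1 (t + P) = g1 t"
    by (rule periodic_derivative[OF P(2) d1])
  have per2: "\<And>t. g2 (t + P) = g2 t"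
    by (rule periodic_derivative[OF per1 d2])
  have reduce: "\<exists>t'\<in>{a..b}. g t = g t' \<and> g1 t = g1 t' \<and> g2 t = g2 t'" for t
  proof -
    obtain t' where "a \<le> t'" "t' \<le> a + P" "(g t, g1 t, g2 t) = (g t', g1 t', g2 t')"
      using periodic_reduce[of P "\<lambda>t. (g t, g1 t, g2 t)"] P per1 per2 by auto
    then show ?thesis
      unfolding P_def by auto
  qed
  have "g ` UNIV \<subseteq> frontier K"
    using reduce K(4) by force
  moreover have curv: "0 < det2 (g1 t) (g2 t)" "norm (g1 t) ^ 3 \<le> R * det2 (g1 t) (g2 t)" for t
    using reduce[of t] rho nz curvature_radius_bound[of g1 g2 _ R] by auto
  ultimately have left: "0 \<le> det2 (g1 t) (g s - g t)" for s t
    using d1 d2 by (intro left_of_tangent_on_frontier[OF K(1,3), where \<epsilon> = 1]) auto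
  show "radius_bounded_convex_curve g g1 g2 UNIV R"
  proof
    show "(g has_vector_derivative g1 t) (at t within UNIV)" "(g1 has_vector_derivative g2 t) (at t within UNIV)" for t
      using d1 d2 by simp_all
  qed (use curv left \<open>0 < R\<close> in simp_all)
  show "closed_or_short_arc g g1 UNIV"
    unfolding closed_or_short_arc_def using P by blast
qed

lemma convex_arc_radius_bounded:
  assumes ca: "convex_arc g g1 g2 a b"
    and rho: "\<forall>t\<in>{a..b}. 1 / curvature g1 g2 t \<le> R" and "0 < R"
  shows "radius_bounded_convex_curve g g1 g2 {a..b} R"
proof -
  from ca have "a < b"
    and d1: "\<And>t. t \<in> {a..b} \<Longrightarrow> (g has_vector_derivative g1 t) (at t within {a..b})"
    and d2: "\<And>t. t \<in> {a..b} \<Longrightarrow> (g1 has_vector_derivative g2 t) (at t within {a..b})"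
    and nz: "\<And>t. t \<in> {a..b} \<Longrightarrow> g1 t \<noteq> 0 \<and> g2 t \<noteq> 0 \<and> 0 < curvature g1 g2 t"
    unfolding convex_arc_def by auto
  from ca obtain K where K: "convex K" "interior K \<noteq> {}" "g ` {a..b} \<subseteq> frontier K"
    unfolding convex_arc_def by auto
  have curv: "0 < det2 (g1 t) (g2 t)" "norm (g1 t) ^ 3 \<le> R * det2 (g1 t) (g2 t)" if "t \<in> {a..b}" for t
    using that rho nz curvature_radius_bound[of g1 g2 t R] by auto
  have left_interior: "0 \<le> det2 (g1 t) (g s - g t)" if t: "t \<in> {a<..<b}" and s: "s \<in> {a..b}" for t s
  proof -
    define \<epsilon> where "\<epsilon> = min (t - a) (b - t)"
    have "0 < \<epsilon>" and ball: "ball t \<epsilon> \<subseteq> {a<..<b}"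
      using t unfolding \<epsilon>_def ball_def dist_real_def by auto
    have at: "at u within {a..b} = at u" if "u \<in> {a<..<b}" for u
      using that at_within_interior[of u "{a..b}"] by simp
    show ?thesis
    proof (rule left_of_tangent_on_frontier[OF K(1,2,3) \<open>0 < \<epsilon>\<close> _ s])
      show "ball t \<epsilon> \<subseteq> {a..b}"
        using ball by auto
      show "(g has_vector_derivative g1 u) (at u)" if "u \<in> ball t \<epsilon>" for u
        using d1[of u] at[of u] ball that by auto
      show "(g1 has_vector_derivative g2 t) (at t)" "0 < det2 (g1 t) (g2 t)"
        using d2[of t] at[OF t] curv(1)[of t] t by auto
    qed
  qed
  have "continuous_on {a..b} g" "continuous_on {a..b} g1"
    using d1 d2 continuous_on_eq_continuous_within has_vector_derivative_continuous by blast+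
  then have "continuous_on (closure {a<..<b}) (\<lambda>t. det2 (g1 t) (g s - g t))" for s
    using \<open>a < b\<close> unfolding det2_def by (auto intro!: continuous_intros)
  then have left: "0 \<le> det2 (g1 t) (g s - g t)" if "t \<in> {a..b}" "s \<in> {a..b}" for s t
    using continuous_ge_on_closure[of "{a<..<b}" _ t 0] left_interior that \<open>a < b\<close> by auto
  show ?thesis
  proof
    show "is_interval {a..b}"
      by (simp add: is_interval_cc)
  qed (use d1 d2 curv left \<open>0 < R\<close> in simp_all)
qed

definition rotation :: "real \<Rightarrow> real \<times> real \<Rightarrow> real \<times> real" where
  "rotation \<theta> v = (cos \<theta> * fst v - sin \<theta> * snd v, sin \<theta> * fst v + cos \<theta> * snd v)"

lemma rotation_zero [simp]: "rotation 0 v = v"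
  by (simp add: rotation_def)

lemma det2_rotation: "det2 (rotation \<alpha> v) (rotation \<beta> v) = (v \<bullet> v) * sin (\<beta> - \<alpha>)"
  by (simp add: rotation_def det2_def inner_real_pair sin_diff algebra_simps)

lemma inner_rotation: "rotation \<alpha> v \<bullet> rotation \<beta> v = (v \<bullet> v) * cos (\<beta> - \<alpha>)"
  by (simp add: rotation_def inner_real_pair cos_diff algebra_simps)

text \<open>Along a curve whose tangent angle \<open>\<psi>\<close> grows at the rate \<open>f = det2 v v' / (v \<bullet> v)\<close>, the
  component of \<open>v\<close> along the direction rotated by \<open>\<psi>\<close> keeps a constant share of \<open>norm v\<close>;
  squaring avoids differentiating the norm.\<close>

lemma inner_rotation_ratio_constant:
  fixes v v' :: "real \<Rightarrow> real \<times> real" and \<psi> f :: "real \<Rightarrow> real"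
  assumes deriv: "\<And>t. t \<in> {a..b} \<Longrightarrow> (v has_vector_derivative v' t) (at t within {a..b})"
    and angle: "\<And>t. t \<in> {a..b} \<Longrightarrow> (\<psi> has_real_derivative f t) (at t within {a..b})"
    and turning: "\<And>t. t \<in> {a..b} \<Longrightarrow> f t * (v t \<bullet> v t) = det2 (v t) (v' t)"
    and nonzero: "\<And>t. t \<in> {a..b} \<Longrightarrow> v t \<noteq> 0"
  obtains c where "\<And>t. t \<in> {a..b} \<Longrightarrow> (v t \<bullet> rotation (\<psi> t) u)\<^sup>2 / (v t \<bullet> v t) = c"
proof -
  define w where "w t = rotation (\<psi> t) u" for t
  define E where "E t = v t \<bullet> w t" for t
  define N where "N t = v t \<bullet> v t" for t
  have "((\<lambda>t. (E t)\<^sup>2 / N t) has_real_derivative 0) (at t within {a..b})" if t: "t \<in> {a..b}" for t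
  proof -
    note dv = has_real_derivative_components[OF deriv[OF t]]
    define E' where "E' = v' t \<bullet> w t + f t * det2 (w t) (v t)"
    have dE: "(E has_real_derivative E') (at t within {a..b})"
      unfolding E_def[abs_def] w_def E'_def inner_real_pair rotation_def det2_def
      by (auto intro!: derivative_eq_intros dv angle[OF t] simp: algebra_simps)
    have dN: "(N has_real_derivative 2 * (v t \<bullet> v' t)) (at t within {a..b})"
      unfolding N_def[abs_def] inner_real_pair by (auto intro!: derivative_eq_intros dv simp: algebra_simps)
    have "N t \<noteq> 0"
      using nonzero[OF t] by (simp add: N_def)
    have "N t * (v' t \<bullet> w t) = (v t \<bullet> v' t) * E t + det2 (v t) (v' t) * det2 (v t) (w t)"
      using inner_det2_identity[of "v t" "v' t" "w t"] unfolding E_def N_def by (simp add: inner_commute)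
    moreover have "f t * det2 (w t) (v t) * N t = (f t * N t) * det2 (w t) (v t)"
      by (simp add: ac_simps)
    then have "f t * det2 (w t) (v t) * N t = - det2 (v t) (v' t) * det2 (v t) (w t)"
      using turning[OF t] unfolding N_def by (simp add: det2_swap[of "w t" "v t"])
    ultimately have key: "E' * N t = E t * (v t \<bullet> v' t)"
      unfolding E'_def by (simp add: algebra_simps)
    have "((\<lambda>t. (E t)\<^sup>2 / N t) has_real_derivative
        (of_nat 2 * (E' * E t ^ (2 - Suc 0)) * N t - (E t)\<^sup>2 * (2 * (v t \<bullet> v' t))) / (N t * N t))
        (at t within {a..b})"
      by (rule DERIV_divide[OF DERIV_power[OF dE] dN \<open>N t \<noteq> 0\<close>])
    moreover have "of_nat 2 * (E' * E t ^ (2 - Suc 0)) * N t - (E t)\<^sup>2 * (2 * (v t \<bullet> v' t)) = 0"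
      using key by (simp add: power2_eq_square algebra_simps)
    ultimately show ?thesis
      by (metis div_0)
  qed
  then obtain c where "\<forall>t\<in>{a..b}. (E t)\<^sup>2 / N t = c"
    using has_field_derivative_zero_constant[of "{a..b}"] by blast
  then show thesis
    using that unfolding E_def N_def w_def by blast
qed

lemma continuous_pos_if_nonzero:
  fixes E :: "real \<Rightarrow> real"
  assumes "continuous_on {a..b} E" "0 < E a" "\<And>s. s \<in> {a..b} \<Longrightarrow> E s \<noteq> 0" "t \<in> {a..b}"
  shows "0 < E t"
proof (rule ccontr)
  assume "\<not> 0 < E t"
  moreover have "continuous_on {a..t} E"
    using assms(1) by (rule continuous_on_subset) (use assms(4) in auto)
  ultimately obtain z where "a \<le> z" "z \<le> t" "E z = 0"
    using IVT2'[of E t 0 a] assms(2,4) by force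
  then show False
    using assms(3)[of z] assms(4) by auto
qed

lemma rotation_representation:
  fixes v v' :: "real \<Rightarrow> real \<times> real" and \<psi> f :: "real \<Rightarrow> real"
  assumes deriv: "\<And>t. t \<in> {a..b} \<Longrightarrow> (v has_vector_derivative v' t) (at t within {a..b})"
    and angle: "\<And>t. t \<in> {a..b} \<Longrightarrow> (\<psi> has_real_derivative f t) (at t within {a..b})"
    and turning: "\<And>t. t \<in> {a..b} \<Longrightarrow> f t * (v t \<bullet> v t) = det2 (v t) (v' t)"
    and nonzero: "\<And>t. t \<in> {a..b} \<Longrightarrow> v t \<noteq> 0"
    and "\<psi> a = 0" "t \<in> {a..b}"
  shows "v t = norm (v t) *\<^sub>R rotation (\<psi> t) (sgn (v a))"
proof -
  have a: "a \<in> {a..b}"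
    using assms(6) by auto
  define u where "u = sgn (v a)"
  have "u \<bullet> u = 1"
    using nonzero[OF a] by (simp add: u_def dot_square_norm norm_sgn)
  define E where "E s = v s \<bullet> rotation (\<psi> s) u" for s
  obtain c where c: "\<And>s. s \<in> {a..b} \<Longrightarrow> (E s)\<^sup>2 / (v s \<bullet> v s) = c"
    using inner_rotation_ratio_constant[OF deriv angle turning nonzero] unfolding E_def by blast
  have Ea: "E a = norm (v a)"
    unfolding E_def u_def using \<open>\<psi> a = 0\<close> nonzero[OF a]
    by (simp add: sgn_div_norm dot_square_norm power2_eq_square)
  then have "c = 1"
    using c[OF a] nonzero[OF a] by (simp add: dot_square_norm)
  then have E_sq: "(E s)\<^sup>2 = (norm (v s))\<^sup>2" if "s \<in> {a..b}" for s
    using c[OF that] nonzero[OF that] by (simp add: dot_square_norm)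
  have "continuous_on {a..b} v" "continuous_on {a..b} \<psi>"
    using deriv angle continuous_on_eq_continuous_within has_vector_derivative_continuous DERIV_continuous_on
    by blast+
  then have "continuous_on {a..b} E"
    unfolding E_def[abs_def] rotation_def inner_real_pair by (intro continuous_intros)
  have "0 < E t"
  proof (rule continuous_pos_if_nonzero[OF \<open>continuous_on {a..b} E\<close> _ _ assms(6)])
    show "0 < E a"
      using Ea nonzero[OF a] by simp
    show "E s \<noteq> 0" if "s \<in> {a..b}" for s
      using E_sq[OF that] nonzero[OF that] by auto
  qed
  then have "E t = norm (v t)"
    using E_sq[OF assms(6)] by (simp add: power2_eq_iff_nonneg)
  moreover have w: "norm (rotation (\<psi> t) u) = 1"
    using \<open>u \<bullet> u = 1\<close> by (simp add: norm_eq_sqrt_inner inner_rotation)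
  ultimately have "v t \<bullet> rotation (\<psi> t) u = norm (v t) * norm (rotation (\<psi> t) u)"
    by (simp add: E_def)
  then have "norm (v t) *\<^sub>R rotation (\<psi> t) u = norm (rotation (\<psi> t) u) *\<^sub>R v t"
    by (simp only: norm_cauchy_schwarz_eq)
  then show ?thesis
    using w by (simp add: u_def)
qed

lemma convex_arc_tangent_angle:
  assumes "convex_arc g g1 g2 a b"
  obtains \<psi> where "\<psi> a = 0" "\<psi> b = total_curvature g1 g2 a b"
    and "\<And>s t. a \<le> s \<Longrightarrow> s < t \<Longrightarrow> t \<le> b \<Longrightarrow> \<psi> s < \<psi> t"
    and "\<And>t. t \<in> {a..b} \<Longrightarrow> g1 t = norm (g1 t) *\<^sub>R rotation (\<psi> t) (sgn (g1 a))"
proof -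
  from assms have d2: "\<And>t. t \<in> {a..b} \<Longrightarrow> (g1 has_vector_derivative g2 t) (at t within {a..b})"
    and "continuous_on {a..b} g2"
    and nz: "\<And>t. t \<in> {a..b} \<Longrightarrow> g1 t \<noteq> 0 \<and> g2 t \<noteq> 0 \<and> 0 < curvature g1 g2 t"
    unfolding convex_arc_def by auto
  define f where "f t = curvature g1 g2 t * norm (g1 t)" for t
  define \<psi> where "\<psi> t = integral {a..t} f" for t
  have "continuous_on {a..b} g1"
    using d2 continuous_on_eq_continuous_within has_vector_derivative_continuous by blast
  then have "continuous_on {a..b} f"
    unfolding f_def[abs_def] curvature_def det2_def
    using \<open>continuous_on {a..b} g2\<close> nz by (intro continuous_intros) auto
  have turning: "f t * (g1 t \<bullet> g1 t) = det2 (g1 t) (g2 t)" if "t \<in> {a..b}" for t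
    unfolding f_def curvature_def using nz[OF that]
    by (simp add: dot_square_norm power2_eq_square power3_eq_cube)
  have angle: "(\<psi> has_real_derivative f t) (at t within {a..b})" if "t \<in> {a..b}" for t
    unfolding \<psi>_def[abs_def] using \<open>continuous_on {a..b} f\<close> that by (rule integral_has_real_derivative)
  have "\<psi> a = 0"
    by (simp add: \<psi>_def)
  show thesis
  proof (rule that)
    show "\<psi> a = 0" "\<psi> b = total_curvature g1 g2 a b"
      by (simp_all add: \<psi>_def total_curvature_def f_def[abs_def])
    show "\<psi> s < \<psi> t" if "a \<le> s" "s < t" "t \<le> b" for s t
    proof (rule DERIV_pos_imp_increasing_open[OF that(2)])
      fix r
      assume "s < r" "r < t"
      then have "at r within {a..b} = at r" "r \<in> {a..b}"
        using that by (auto intro!: at_within_interior)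
      then show "\<exists>y. (\<psi> has_real_derivative y) (at r) \<and> 0 < y"
        using angle[of r] nz[of r] by (auto simp: f_def)
    next
      have "continuous_on {a..b} \<psi>"
        using angle by (rule DERIV_continuous_on)
      then show "continuous_on {s..t} \<psi>"
        by (rule continuous_on_subset) (use that in auto)
    qed
    show "g1 t = norm (g1 t) *\<^sub>R rotation (\<psi> t) (sgn (g1 a))" if "t \<in> {a..b}" for t
      using nz by (intro rotation_representation[OF d2 angle turning _ \<open>\<psi> a = 0\<close> that]) auto
  qed
qed

lemma convex_arc_turns_at_most_pi:
  assumes "convex_arc g g1 g2 a b" "total_curvature g1 g2 a b \<le> pi"
  shows "turns_at_most_pi g1 a b"
  unfolding turns_at_most_pi_def
proof (intro allI impI)
  fix s t
  assume st: "a \<le> s" "s < t" "t \<le> b"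
  obtain \<psi> where \<psi>: "\<psi> a = 0" "\<psi> b \<le> pi" "\<And>s t. a \<le> s \<Longrightarrow> s < t \<Longrightarrow> t \<le> b \<Longrightarrow> \<psi> s < \<psi> t"
    and rep: "\<And>t. t \<in> {a..b} \<Longrightarrow> g1 t = norm (g1 t) *\<^sub>R rotation (\<psi> t) (sgn (g1 a))"
    using convex_arc_tangent_angle[OF assms(1)] assms(2) by metis
  have nz: "g1 r \<noteq> 0" if "r \<in> {a..b}" for r
    using assms(1) that unfolding convex_arc_def by auto
  define \<theta> where "\<theta> = \<psi> t - \<psi> s"
  have "\<psi> a \<le> \<psi> s" "\<psi> t \<le> \<psi> b"
    using \<psi>(3)[of a s] \<psi>(3)[of t b] st by (cases "a = s"; cases "t = b"; auto)+
  then have \<theta>: "0 < \<theta>" "\<theta> \<le> pi"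
    using \<psi>(1,2) \<psi>(3)[OF st] by (auto simp: \<theta>_def)
  define ns nt where "ns = norm (g1 s)" and "nt = norm (g1 t)"
  have N: "0 < ns * nt"
    using nz[of s] nz[of t] st by (auto simp: ns_def nt_def)
  have "sgn (g1 a) \<bullet> sgn (g1 a) = 1"
    using nz[of a] st by (simp add: dot_square_norm norm_sgn)
  moreover have "g1 s = ns *\<^sub>R rotation (\<psi> s) (sgn (g1 a))" "g1 t = nt *\<^sub>R rotation (\<psi> t) (sgn (g1 a))"
    unfolding ns_def nt_def using st by (auto intro: rep)
  ultimately have det: "det2 (g1 s) (g1 t) = ns * nt * sin \<theta>" and inner: "g1 s \<bullet> g1 t = ns * nt * cos \<theta>"
    by (simp_all add: \<theta>_def det2_scaleR det2_rotation inner_rotation)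
  have "0 \<le> sin \<theta>"
    using \<theta> by (simp add: sin_ge_zero)
  moreover have "cos \<theta> < 0" if "sin \<theta> = 0"
  proof -
    have "\<theta> = pi"
      using \<theta> sin_gt_zero[of \<theta>] that by fastforce
    then show ?thesis
      by simp
  qed
  ultimately show "0 \<le> det2 (g1 s) (g1 t) \<and> (det2 (g1 s) (g1 t) = 0 \<longrightarrow> g1 s \<bullet> g1 t < 0)"
    using N unfolding det inner by (auto simp: mult_pos_neg)
qed

lemma radius_bounded_convex_curve_if_closed_or_short:
  assumes "closed_convex_curve g g1 g2 a b \<or> (convex_arc g g1 g2 a b \<and> total_curvature g1 g2 a b \<le> pi)"
    and rho: "\<forall>t\<in>{a..b}. 1 / curvature g1 g2 t \<le> R" and "0 < R"
  obtains I where "radius_bounded_convex_curve g g1 g2 I R" "closed_or_short_arc g g1 I" "{a..b} \<subseteq> I"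
proof (cases "closed_convex_curve g g1 g2 a b")
  case True
  show thesis
    by (rule that[OF closed_convex_curve_radius_bounded[OF True rho \<open>0 < R\<close>]]) simp
next
  case False
  then have arc: "convex_arc g g1 g2 a b" and "total_curvature g1 g2 a b \<le> pi"
    using assms(1) by auto
  moreover have "a < b"
    using arc unfolding convex_arc_def by simp
  ultimately have "closed_or_short_arc g g1 {a..b}"
    unfolding closed_or_short_arc_def using convex_arc_turns_at_most_pi by blast
  then show thesis
    by (rule that[OF convex_arc_radius_bounded[OF arc rho \<open>0 < R\<close>]]) simp
qed

section \<open>Three lattice points near the curve are not collinear\<close>

text \<open>The hypothesis on \<open>\<delta>\<close> says \<open>2\<delta> < R + d - sqrt (R\<^sup>2 + 2 R d)\<close>, the smaller root \<open>X\<close> of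
  \<open>(d - X)\<^sup>2 = 2 R X\<close>.\<close>

lemma mindist_delta_gap:
  fixes d R \<delta> :: real
  assumes "0 < R" "0 \<le> d"
    and "\<delta> < d\<^sup>2 / (2 * (R + d + sqrt ((R + d)\<^sup>2 - d\<^sup>2)))"
  shows "0 < d - 2 * \<delta>" "4 * R * \<delta> < (d - 2 * \<delta>)\<^sup>2"
proof -
  define s where "s = sqrt ((R + d)\<^sup>2 - d\<^sup>2)"
  have radicand: "(R + d)\<^sup>2 - d\<^sup>2 = R\<^sup>2 + 2 * R * d"
    by (simp add: power2_eq_square algebra_simps)
  have "R\<^sup>2 \<le> (R + d)\<^sup>2 - d\<^sup>2"
    unfolding radicand using assms(1,2) by simp
  then have sR: "R \<le> s"
    unfolding s_def using assms(1) real_le_rsqrt by blast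
  have ss: "s\<^sup>2 = (R + d)\<^sup>2 - d\<^sup>2"
    unfolding s_def radicand using assms(1,2) by simp
  have den: "0 < R + d + s"
    using assms(1,2) sR by simp
  have "\<delta> * (2 * (R + d + s)) < d\<^sup>2"
    using assms(3) den unfolding s_def[symmetric] by (simp add: pos_less_divide_eq)
  also have "d\<^sup>2 = (R + d - s) * (R + d + s)"
    using ss by (simp add: power2_eq_square algebra_simps)
  finally have "(2 * \<delta>) * (R + d + s) < (R + d - s) * (R + d + s)"
    by (simp add: algebra_simps)
  then have gap: "2 * \<delta> < R + d - s"
    using den by (simp only: mult_less_cancel_right)
  then show "0 < d - 2 * \<delta>"
    using sR by simp
  have "s\<^sup>2 < (R + d - 2 * \<delta>)\<^sup>2"
    using gap sR assms(1) by (intro power_strict_mono) auto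
  then show "4 * R * \<delta> < (d - 2 * \<delta>)\<^sup>2"
    unfolding ss by (simp add: power2_eq_square algebra_simps)
qed

lemma (in radius_bounded_convex_curve) no_triple_near_line:
  assumes ext: "closed_or_short_arc g g1 I" and e: "norm e = 1"
    and t: "ta \<in> I" "tm \<in> I" "tb \<in> I"
    and along: "\<bar>e \<bullet> g ta - \<tau>a\<bar> < \<delta>" "\<bar>e \<bullet> g tm - \<tau>m\<bar> < \<delta>" "\<bar>e \<bullet> g tb - \<tau>b\<bar> < \<delta>"
    and across: "\<bar>det2 e (g ta) - c\<bar> < \<delta>" "\<bar>det2 e (g tm) - c\<bar> < \<delta>" "\<bar>det2 e (g tb) - c\<bar> < \<delta>"
    and order: "\<tau>a + d \<le> \<tau>m" "\<tau>m + d \<le> \<tau>b"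
    and gap: "0 < d - 2 * \<delta>" "4 * R * \<delta> < (d - 2 * \<delta>)\<^sup>2"
  shows False
proof -
  interpret f: radius_bounded_convex_curve "\<lambda>t. frame e (g t)" "\<lambda>t. frame e (g1 t)" "\<lambda>t. frame e (g2 t)" I R
    using e by (rule frame_curve)
  show False
  proof (rule f.no_flat_triple[OF closed_or_short_arc_frame[OF e ext] t])
    have D: "d - 2 * \<delta> < f.x tm - f.x ta" "d - 2 * \<delta> < f.x tb - f.x tm"
      using along order by (auto simp: frame_coords[OF e] abs_less_iff)
    then show "f.x ta < f.x tm" "f.x tm < f.x tb"
      using gap(1) by auto
    have "(d - 2 * \<delta>)\<^sup>2 < (f.x tm - f.x ta)\<^sup>2" "(d - 2 * \<delta>)\<^sup>2 < (f.x tb - f.x tm)\<^sup>2"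
      using D gap(1) by (auto intro!: power_strict_mono)
    then have "(d - 2 * \<delta>)\<^sup>2 < (f.x ta - f.x tm)\<^sup>2" "(d - 2 * \<delta>)\<^sup>2 < (f.x tb - f.x tm)\<^sup>2"
      by (simp_all add: power2_commute)
    moreover have "2 * R * \<bar>f.y ta - f.y tm\<bar> \<le> 4 * R * \<delta>" "2 * R * \<bar>f.y tb - f.y tm\<bar> \<le> 4 * R * \<delta>"
      using across radius_pos by (auto intro!: mult_left_mono simp: frame_coords[OF e] abs_le_iff abs_less_iff)
    ultimately show "2 * R * \<bar>f.y ta - f.y tm\<bar> < (f.x ta - f.x tm)\<^sup>2"
      "2 * R * \<bar>f.y tb - f.y tm\<bar> < (f.x tb - f.x tm)\<^sup>2"
      using gap(2) by linarith+
  qed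
qed

lemma (in radius_bounded_convex_curve) no_collinear_triple_near_curve:
  assumes ext: "closed_or_short_arc g g1 I"
    and t: "t1 \<in> I" "t2 \<in> I" "t3 \<in> I"
    and near: "dist (g t1) P1 < \<delta>" "dist (g t2) P2 < \<delta>" "dist (g t3) P3 < \<delta>"
    and sep: "d \<le> dist P1 P2" "d \<le> dist P2 P3" "d \<le> dist P1 P3"
    and gap: "0 < d - 2 * \<delta>" "4 * R * \<delta> < (d - 2 * \<delta>)\<^sup>2"
  shows "det2 (P2 - P1) (P3 - P1) \<noteq> 0"
proof
  assume collinear: "det2 (P2 - P1) (P3 - P1) = 0"
  have "0 < d"
    using gap(1) near(1) zero_le_dist[of "g t1" P1] by linarith
  then have "P1 \<noteq> P2"
    using sep(1) by auto
  define e where "e = sgn (P2 - P1)"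
  have e: "norm e = 1"
    using \<open>P1 \<noteq> P2\<close> by (simp add: e_def norm_sgn)
  have "det2 e (P - P1) = det2 (P2 - P1) (P - P1) / norm (P2 - P1)" for P
    by (simp add: e_def sgn_div_norm det2_def divide_inverse algebra_simps)
  moreover have "det2 (P2 - P1) (P - P1) = 0" if "P \<in> {P2, P3}" for P
    using that collinear by (auto simp: det2_def)
  ultimately have "det2 e P - det2 e P1 = 0" if "P \<in> {P2, P3}" for P
    using that by (simp add: det2_diff_right)
  then have line: "det2 e P2 = det2 e P1" "det2 e P3 = det2 e P1"
    by auto
  have "d \<le> \<bar>e \<bullet> P1 - e \<bullet> P2\<bar>" "d \<le> \<bar>e \<bullet> P2 - e \<bullet> P3\<bar>" "d \<le> \<bar>e \<bullet> P1 - e \<bullet> P3\<bar>"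
    using sep dist_on_line[OF e] line by auto
  then consider
      "e \<bullet> P1 + d \<le> e \<bullet> P2 \<and> e \<bullet> P2 + d \<le> e \<bullet> P3 \<or> e \<bullet> P3 + d \<le> e \<bullet> P2 \<and> e \<bullet> P2 + d \<le> e \<bullet> P1"
    | "e \<bullet> P2 + d \<le> e \<bullet> P1 \<and> e \<bullet> P1 + d \<le> e \<bullet> P3 \<or> e \<bullet> P3 + d \<le> e \<bullet> P1 \<and> e \<bullet> P1 + d \<le> e \<bullet> P2"
    | "e \<bullet> P1 + d \<le> e \<bullet> P3 \<and> e \<bullet> P3 + d \<le> e \<bullet> P2 \<or> e \<bullet> P2 + d \<le> e \<bullet> P3 \<and> e \<bullet> P3 + d \<le> e \<bullet> P1"
    using \<open>0 < d\<close> by (auto simp: abs_real_def split: if_splits)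
  then show False
    using no_triple_near_line[OF ext e _ _ _ _ _ _ _ _ _ _ _ gap] t
      inner_diff_less_of_dist[OF e near(1)] inner_diff_less_of_dist[OF e near(2)] inner_diff_less_of_dist[OF e near(3)]
      det2_diff_less_of_dist[OF e near(1)] det2_diff_less_of_dist[OF e near(2)] det2_diff_less_of_dist[OF e near(3)]
    unfolding line by cases metis+
qed

theorem lemma7p5:
  fixes g g1 g2 :: "real \<Rightarrow> real \<times> real"
    and a b R1 R2 \<delta> :: real
    and v0 v1 v2 P1' P2' P3' P1 P2 P3 :: "real \<times> real"
  assumes curve: "closed_convex_curve g g1 g2 a b \<or>
                  (convex_arc g g1 g2 a b \<and> total_curvature g1 g2 a b \<le> pi)"
    and R: "0 < R1" "R1 \<le> R2"
    and rho: "\<forall>t\<in>{a..b}. R1 \<le> 1 / curvature g1 g2 t \<and> 1 / curvature g1 g2 t \<le> R2"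
    and indep: "det2 v1 v2 \<noteq> 0"
    and latt: "P1' \<in> lattice v0 v1 v2" "P2' \<in> lattice v0 v1 v2" "P3' \<in> lattice v0 v1 v2"
    and distinct: "P1' \<noteq> P2'" "P2' \<noteq> P3'" "P1' \<noteq> P3'"
    and near: "infdist P1' (g ` {a..b}) < \<delta>" "infdist P2' (g ` {a..b}) < \<delta>"
              "infdist P3' (g ` {a..b}) < \<delta>"
    and delta_pos: "0 < \<delta>"
    and delta_bound: "\<delta> < (lattice_mindist (lattice v0 v1 v2))\<^sup>2 /
        (2 * (R2 + lattice_mindist (lattice v0 v1 v2) +
              sqrt ((R2 + lattice_mindist (lattice v0 v1 v2))\<^sup>2 - (lattice_mindist (lattice v0 v1 v2))\<^sup>2)))"
    and on_curve: "P1 \<in> g ` {a..b}" "P2 \<in> g ` {a..b}" "P3 \<in> g ` {a..b}"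
    and close: "dist P1 P1' < \<delta>" "dist P2 P2' < \<delta>" "dist P3 P3' < \<delta>"
  shows "tri_area P1 P2 P3 \<ge> lattice_area v1 v2 / 2 - (dist P2 P1 + dist P3 P2) * \<delta> - 3 / 2 * \<delta>\<^sup>2"
proof -
  have "0 < R2"
    using R by simp
  moreover have "\<forall>t\<in>{a..b}. 1 / curvature g1 g2 t \<le> R2"
    using rho by blast
  ultimately obtain I where "radius_bounded_convex_curve g g1 g2 I R2"
    and ext: "closed_or_short_arc g g1 I" and "{a..b} \<subseteq> I"
    using radius_bounded_convex_curve_if_closed_or_short[OF curve] by blast
  then interpret radius_bounded_convex_curve g g1 g2 I R2
    by simp
  obtain t1 t2 t3 where t: "t1 \<in> I" "t2 \<in> I" "t3 \<in> I" and P: "P1 = g t1" "P2 = g t2" "P3 = g t3"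
    using on_curve \<open>{a..b} \<subseteq> I\<close> by blast
  define d where "d = lattice_mindist (lattice v0 v1 v2)"
  have sep: "d \<le> dist P1' P2'" "d \<le> dist P2' P3'" "d \<le> dist P1' P3'"
    unfolding d_def using latt distinct by (auto intro: lattice_mindist_le_dist)
  have "0 \<le> d"
    unfolding d_def using latt(1,2) distinct(1) by (rule lattice_mindist_nonneg)
  note gap = mindist_delta_gap[OF \<open>0 < R2\<close> \<open>0 \<le> d\<close> delta_bound[folded d_def]]
  have "det2 (P2' - P1') (P3' - P1') \<noteq> 0"
    using close unfolding P by (intro no_collinear_triple_near_curve[OF ext t _ _ _ sep gap])
  then have "lattice_area v1 v2 \<le> \<bar>det2 (P2' - P1') (P3' - P1')\<bar>"
    by (rule lattice_area_le_abs_det2[OF latt])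
  then show ?thesis
    using close by (rule tri_area_perturb[rotated 3])
qed

end
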